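(* There exists a binary linear $[690,659,3]_2 4$ code (length $690$, codimension $31$, minimum distance $3$, covering radius $4$). Consequently $\ell_2(31,4)\le690$.
   Context: $[n,n-r,d]_2R$: binary linear code of length $n$, codimension $r$, minimum distance $d$, covering radius $R$ (smallest $R$ such that every vector of $\mathbb{F}_2^r$ is a sum of at most $R$ columns of a parity-check matrix). $\ell_2(r,R)$ is the smallest length of a binary linear code of codimension $r$ and covering radius $R$. *)

theory Defs
  imports Main "HOL-Library.Z2"
begin

text \<open>Vectors of F_2^n are modelled as functions nat => bit vanishing outside {0..<n}.
 A parity-check matrix with r rows and n columns is H :: nat => nat => bit,
 entry H i j in row i (i < r), column j (j < n); only those entries are used.\<close>

definition vecs :: "nat \<Rightarrow> (nat \<Rightarrow> bit) set" where
  "vecs n = {x. \<forall>j\<ge>n. x j = 0}"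

definition lin_code :: "nat \<Rightarrow> nat \<Rightarrow> (nat \<Rightarrow> nat \<Rightarrow> bit) \<Rightarrow> (nat \<Rightarrow> bit) set" where
  "lin_code r n H = {x \<in> vecs n. \<forall>i<r. (\<Sum>j<n. H i j * x j) = 0}"

definition hamming :: "nat \<Rightarrow> (nat \<Rightarrow> bit) \<Rightarrow> (nat \<Rightarrow> bit) \<Rightarrow> nat" where
  "hamming n x y = card {j. j < n \<and> x j \<noteq> y j}"

definition min_dist :: "nat \<Rightarrow> (nat \<Rightarrow> bit) set \<Rightarrow> nat" where
  "min_dist n C = Min {hamming n x y | x y. x \<in> C \<and> y \<in> C \<and> x \<noteq> y}"

definition col_sum :: "nat \<Rightarrow> (nat \<Rightarrow> nat \<Rightarrow> bit) \<Rightarrow> nat set \<Rightarrow> (nat \<Rightarrow> bit)" where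
  "col_sum r H S = (\<lambda>i. if i < r then (\<Sum>j\<in>S. H i j) else 0)"

definition covers :: "nat \<Rightarrow> nat \<Rightarrow> (nat \<Rightarrow> nat \<Rightarrow> bit) \<Rightarrow> nat \<Rightarrow> bool" where
  "covers r n H R \<longleftrightarrow> (\<forall>s\<in>vecs r. \<exists>S\<subseteq>{..<n}. card S \<le> R \<and> s = col_sum r H S)"

definition cov_radius :: "nat \<Rightarrow> nat \<Rightarrow> (nat \<Rightarrow> nat \<Rightarrow> bit) \<Rightarrow> nat" where
  "cov_radius r n H = (LEAST R. covers r n H R)"

definition codim_code :: "nat \<Rightarrow> nat \<Rightarrow> (nat \<Rightarrow> nat \<Rightarrow> bit) \<Rightarrow> bool" where
  "codim_code n r H \<longleftrightarrow> r \<le> n \<and> card (lin_code r n H) = 2 ^ (n - r)"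

text \<open>[n, n-r, d]_2 R code given by parity-check matrix H.\<close>
definition is_code :: "nat \<Rightarrow> nat \<Rightarrow> nat \<Rightarrow> nat \<Rightarrow> (nat \<Rightarrow> nat \<Rightarrow> bit) \<Rightarrow> bool" where
  "is_code n r d R H \<longleftrightarrow> codim_code n r H \<and> min_dist n (lin_code r n H) = d
      \<and> cov_radius r n H = R"

definition ell2 :: "nat \<Rightarrow> nat \<Rightarrow> nat" where
  "ell2 r R = (LEAST n. \<exists>H. codim_code n r H \<and> cov_radius r n H = R)"

end

theory Submission
  imports
    Defs
    "HOL-Library.Indicator_Function"
    "HOL-Library.FuncSet"
    "HOL-Computational_Algebra.Polynomial"
begin

text \<open>
  The parity-check matrix has \<open>690 = 21 * 32 + 18\<close> columns, indexed by \<open>32 a + b\<close> with a block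
  number \<open>a \<le> 21\<close> and \<open>b < 32\<close> read as an element of GF(32). Column \<open>(a, b)\<close> is an 11-bit
  vector \<open>h\<^sub>a\<close> on top of the four GF(32)-coordinates \<open>b, x\<^sub>a b, x\<^sub>a\<^sup>2 b, x\<^sub>a\<^sup>3 b\<close>, where
  \<open>x\<^sub>a\<close> is the field element with binary digits \<open>a\<close>.

  Covering radius 4: every vector of \<open>F\<^sub>2\<^sup>11\<close> is the sum of four distinct vectors among
  \<open>h\<^sub>0, \<dots>, h\<^sub>2\<^sub>0\<close> (checked against a computer-generated table). Given a syndrome
  \<open>(s, t\<^sub>0, \<dots>, t\<^sub>3)\<close>, pick such blocks for \<open>s\<close>; as their \<open>x\<^sub>a\<close> are distinct, the Vandermonde
  system \<open>\<Sum>\<^sub>a x\<^sub>a\<^sup>k b\<^sub>a = t\<^sub>k\<close> (\<open>k < 4\<close>) is solvable in GF(32), and the columns \<open>(a, b\<^sub>a)\<close> add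
  up to the syndrome. Radius 3 fails by counting, since \<open>691\<^sup>3 < 2\<^sup>3\<^sup>1\<close>.

  Minimum distance 3: all columns are nonzero and pairwise distinct, while \<open>h\<^sub>2\<^sub>1 = h\<^sub>0 + h\<^sub>1\<close>
  makes the columns 0, 32 and 672 sum to zero. Codimension 31: covering makes the syndrome
  map onto, so the kernel has \<open>2\<^sup>6\<^sup>5\<^sup>9\<close> elements.
\<close>

\<comment> \<open>\<open>bit\<close> is used as the field \<open>F\<^sub>2\<close>: keep \<open>+\<close> and \<open>*\<close> rather than their Boolean rewrites.\<close>
declare add_bit_eq_xor [simp del] mult_bit_eq_and [simp del] sum_of_bool_eq [simp del]

lemma bit_add_self [simp]: "x + x = (0 :: bit)"
  by (cases x) simp_all

lemma of_bool_bit_xor: "(of_bool (bit (xor m n) i) :: bit) = of_bool (bit m i) + of_bool (bit n i)"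
  by (simp add: bit_xor_iff of_bool_def)

lemma ex_less_power_with_bits: "\<exists>n::nat. n < 2 ^ k \<and> (\<forall>i<k. bit n i \<longleftrightarrow> P i)"
proof -
  let ?n = "horner_sum of_bool (2::nat) (map P [0..<k])"
  have "?n < 2 ^ k"
    using horner_sum_of_bool_2_less[of "map P [0..<k]"] by simp
  moreover have "bit ?n i \<longleftrightarrow> P i" if "i < k" for i
    using that by (simp add: bit_horner_sum_bit_iff)
  ultimately show ?thesis
    by blast
qed

lemma ex_bit_neq_less:
  fixes m n :: nat
  assumes "m \<noteq> n" "m < 2 ^ k" "n < 2 ^ k"
  shows "\<exists>i<k. bit m i \<noteq> bit n i"
proof -
  obtain i where i: "bit m i \<noteq> bit n i"
    using assms(1) bit_eq_iff by blast
  have "i < k"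
  proof (cases "bit m i")
    case True
    then show ?thesis
      using assms(2) by (metis bit_take_bit_iff take_bit_nat_eq_self_iff)
  next
    case False
    then show ?thesis
      using i assms(3) by (metis bit_take_bit_iff take_bit_nat_eq_self_iff)
  qed
  with i show ?thesis
    by blast
qed

section \<open>Binary linear codes described by sets of columns\<close>

lemma inj_indicator_bit: "inj (indicator :: nat set \<Rightarrow> nat \<Rightarrow> bit)"
  by (rule injI) (metis indicator_eq_1_iff subsetI subset_antisym)

lemma vecs_eq_indicator_image: "vecs n = indicator ` Pow {..<n}"
proof
  show "indicator ` Pow {..<n} \<subseteq> vecs n"
    by (auto simp: vecs_def indicator_def)
  show "vecs n \<subseteq> indicator ` Pow {..<n}"
  proof
    fix x assume x: "x \<in> vecs n"
    have "x = indicator {j. j < n \<and> x j = 1}"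
      using x by (auto simp: vecs_def indicator_def fun_eq_iff)
    then show "x \<in> indicator ` Pow {..<n}" by blast
  qed
qed

lemma finite_vecs: "finite (vecs n)"
  by (simp add: vecs_eq_indicator_image)

lemma card_vecs: "card (vecs n) = 2 ^ n"
  by (simp add: vecs_eq_indicator_image card_image inj_on_subset[OF inj_indicator_bit] card_Pow)

lemma sum_mult_indicator_bit:
  "S \<subseteq> {..<n::nat} \<Longrightarrow> (\<Sum>j<n. f j * indicator S j) = (\<Sum>j\<in>S. f j :: bit)"
  unfolding indicator_def by (subst sum_mult_of_bool_eq) (simp_all add: Int_absorb1)

lemma col_sum_eq_0_iff: "col_sum r H S = (\<lambda>_. 0) \<longleftrightarrow> (\<forall>i<r. (\<Sum>j\<in>S. H i j) = 0)"
  by (auto simp: col_sum_def fun_eq_iff)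

lemma col_sum_in_vecs: "col_sum r H S \<in> vecs r"
  by (simp add: col_sum_def vecs_def)

lemma lin_code_eq_indicator_image:
  "lin_code r n H = indicator ` {S. S \<subseteq> {..<n} \<and> col_sum r H S = (\<lambda>_. 0)}"
  unfolding lin_code_def vecs_eq_indicator_image col_sum_eq_0_iff
  by (auto simp: sum_mult_indicator_bit Int_absorb1)

lemma sum_sym_diff_bit:
  assumes "finite S" "finite T"
  shows "(\<Sum>j\<in>sym_diff S T. f j) = (\<Sum>j\<in>S. f j) + (\<Sum>j\<in>T. f j :: bit)"
proof -
  have split: "sum f A = sum f (A - B) + sum f (A \<inter> B)" if "finite A" for A B
    using sum.subset_diff[of "A \<inter> B" A f] that by (simp add: Diff_Int add.commute)
  have "sum f (sym_diff S T) = sum f (S - T) + sum f (T - S)"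
    using assms by (intro sum.union_disjoint) auto
  also have "\<dots> = sum f (S - T) + sum f (S \<inter> T) + (sum f (T - S) + sum f (T \<inter> S))"
    by (simp add: Int_commute)
  also have "\<dots> = sum f S + sum f T"
    using split[OF assms(1), of T] split[OF assms(2), of S] by simp
  finally show ?thesis .
qed

lemma col_sum_sym_diff:
  "finite S \<Longrightarrow> finite T \<Longrightarrow> col_sum r H (sym_diff S T) i = col_sum r H S i + col_sum r H T i"
  by (simp add: col_sum_def sum_sym_diff_bit)

lemma hamming_indicator:
  assumes "S \<subseteq> {..<n}" "T \<subseteq> {..<n}"
  shows "hamming n (indicator S) (indicator T) = card (sym_diff S T)"
proof -
  have "{j. j < n \<and> (indicator S j :: bit) \<noteq> indicator T j} = sym_diff S T"
    using assms by (auto simp: indicator_def)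
  then show ?thesis by (simp add: hamming_def)
qed

lemma min_dist_lin_code_eqI:
  assumes lower: "\<And>S. S \<subseteq> {..<n} \<Longrightarrow> S \<noteq> {} \<Longrightarrow> col_sum r H S = (\<lambda>_. 0) \<Longrightarrow> d \<le> card S"
    and witness: "W \<subseteq> {..<n}" "W \<noteq> {}" "col_sum r H W = (\<lambda>_. 0)" "card W = d"
  shows "min_dist n (lin_code r n H) = d"
proof -
  let ?K = "{S. S \<subseteq> {..<n} \<and> col_sum r H S = (\<lambda>_. 0)}"
  let ?A = "{hamming n x y | x y. x \<in> lin_code r n H \<and> y \<in> lin_code r n H \<and> x \<noteq> y}"
  have "?A \<subseteq> (\<lambda>(x, y). hamming n x y) ` (vecs n \<times> vecs n)"
    by (auto simp: lin_code_def)
  then have finite: "finite ?A"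
    by (rule finite_subset) (simp add: finite_vecs)
  have "{} \<in> ?K" "W \<in> ?K"
    using witness(1,3) by (simp_all add: col_sum_eq_0_iff)
  then have "indicator W \<in> lin_code r n H" "indicator {} \<in> lin_code r n H"
    unfolding lin_code_eq_indicator_image by blast+
  moreover have "indicator W \<noteq> (indicator {} :: nat \<Rightarrow> bit)"
    using witness(2) inj_eq[OF inj_indicator_bit] by metis
  ultimately have "hamming n (indicator W) (indicator {}) \<in> ?A"
    by blast
  then have "d \<in> ?A"
    using witness(1,4) by (simp add: hamming_indicator)
  moreover have "d \<le> a" if "a \<in> ?A" for a
  proof -
    obtain S T where ST: "S \<in> ?K" "T \<in> ?K" "S \<noteq> T" "a = hamming n (indicator S) (indicator T)"
      using \<open>a \<in> ?A\<close> unfolding lin_code_eq_indicator_image by auto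
    have "finite S" "finite T"
      using ST(1,2) finite_subset by auto
    then have "col_sum r H (sym_diff S T) = (\<lambda>_. 0)"
      using ST(1,2) by (auto simp: col_sum_sym_diff fun_eq_iff)
    moreover have "sym_diff S T \<subseteq> {..<n}" "sym_diff S T \<noteq> {}"
      using ST(1-3) by auto
    ultimately show ?thesis
      using lower ST by (simp add: hamming_indicator)
  qed
  ultimately show ?thesis
    unfolding min_dist_def by (intro Min_eqI finite) auto
qed

lemma three_le_card_if_col_sum_eq_0:
  assumes nonzero: "\<And>j. j < n \<Longrightarrow> \<exists>i<r. H i j \<noteq> 0"
    and distinct: "\<And>j k. j < n \<Longrightarrow> k < n \<Longrightarrow> j \<noteq> k \<Longrightarrow> \<exists>i<r. H i j \<noteq> H i k"
    and S: "S \<subseteq> {..<n}" "S \<noteq> {}" "col_sum r H S = (\<lambda>_. 0)"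
  shows "3 \<le> card S"
proof -
  have zero: "(\<Sum>j\<in>S. H i j) = 0" if "i < r" for i
    using S(3) that by (simp add: col_sum_eq_0_iff)
  have "finite S"
    using S(1) finite_subset by blast
  moreover have "card S \<noteq> 1"
  proof
    assume "card S = 1"
    then obtain j where "S = {j}"
      by (auto simp: card_1_singleton_iff)
    then show False
      using nonzero[of j] zero S(1) by auto
  qed
  moreover have "card S \<noteq> 2"
  proof
    assume "card S = 2"
    then obtain j k where "S = {j, k}" "j \<noteq> k"
      by (auto simp: card_2_iff)
    moreover have "H i j + H i k = 0 \<Longrightarrow> H i j = H i k" for i
      by (cases "H i j"; cases "H i k") simp_all
    ultimately show False
      using distinct[of j k] zero S(1) by auto
  qed
  ultimately show ?thesis
    using S(2) by (cases "card S") (auto simp: numeral_eq_Suc)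
qed

lemma card_lin_code_mult:
  assumes surj: "vecs r \<subseteq> col_sum r H ` Pow {..<n}"
  shows "card (lin_code r n H) * 2 ^ r = 2 ^ n"
proof -
  define fiber where "fiber s = {S. S \<subseteq> {..<n} \<and> col_sum r H S = s}" for s
  let ?K = "fiber (\<lambda>_. 0)"
  have card_K: "card (lin_code r n H) = card ?K"
    unfolding lin_code_eq_indicator_image fiber_def
    by (rule card_image) (auto intro: inj_on_subset[OF inj_indicator_bit])
  have card_fiber: "card (fiber s) = card ?K" if "s \<in> vecs r" for s
  proof -
    obtain T where T: "T \<subseteq> {..<n}" "col_sum r H T = s"
      using surj \<open>s \<in> vecs r\<close> by auto
    have finite: "finite S" if "S \<subseteq> {..<n}" for S
      using that finite_subset by blast
    \<comment> \<open>translation by T is an involution exchanging the kernel and the fibre over s\<close>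
    have "bij_betw (sym_diff T) ?K (fiber s)"
    proof (rule bij_betw_byWitness[where f' = "sym_diff T"])
      show "sym_diff T ` ?K \<subseteq> fiber s" "sym_diff T ` fiber s \<subseteq> ?K"
        using T finite by (auto simp: fiber_def fun_eq_iff col_sum_sym_diff)
    qed auto
    then show ?thesis
      by (simp add: bij_betw_same_card)
  qed
  have "finite (fiber s)" for s
    by (rule finite_subset[of _ "Pow {..<n}"]) (auto simp: fiber_def)
  then have "card (\<Union>s\<in>vecs r. fiber s) = (\<Sum>s\<in>vecs r. card (fiber s))"
    by (intro card_UN_disjoint finite_vecs) (auto simp: fiber_def)
  moreover have "Pow {..<n} = (\<Union>s\<in>vecs r. fiber s)"
    using col_sum_in_vecs by (auto simp: fiber_def)
  ultimately have "card (Pow {..<n}) = (\<Sum>s\<in>vecs r. card (fiber s))"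
    by simp
  also have "\<dots> = 2 ^ r * card ?K"
    by (simp add: card_fiber card_vecs)
  finally show ?thesis
    by (simp add: card_K card_Pow)
qed

lemma codim_code_if_surj:
  assumes surj: "vecs r \<subseteq> col_sum r H ` Pow {..<n}"
  shows "codim_code n r H"
proof -
  have card: "card (lin_code r n H) * 2 ^ r = 2 ^ n"
    using card_lin_code_mult[OF surj] .
  have "indicator {} \<in> lin_code r n H"
    unfolding lin_code_eq_indicator_image by (rule imageI) (simp add: col_sum_eq_0_iff)
  moreover have "finite (lin_code r n H)"
    by (rule finite_subset[OF _ finite_vecs]) (auto simp: lin_code_def)
  ultimately have "card (lin_code r n H) \<noteq> 0"
    by auto
  then have "(2::nat) ^ r \<le> card (lin_code r n H) * 2 ^ r"
    by simp
  then have "(2::nat) ^ r \<le> 2 ^ n"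
    using card by simp
  then have "r \<le> n"
    by simp
  then have "(2::nat) ^ n = 2 ^ (n - r) * 2 ^ r"
    by (simp flip: power_add)
  then show ?thesis
    using card \<open>r \<le> n\<close> by (simp add: codim_code_def)
qed

lemma covers_mono: "covers r n H R \<Longrightarrow> R \<le> R' \<Longrightarrow> covers r n H R'"
  unfolding covers_def by (meson order.trans)

lemma covers_imp_two_power_le:
  assumes "covers r n H R"
  shows "2 ^ r \<le> (n + 1) ^ R"
proof -
  let ?L = "{xs. set xs \<subseteq> {..n} \<and> length xs = R}"
  \<comment> \<open>a set of at most R columns is padded to a list of length R with the dummy index n\<close>
  have "vecs r \<subseteq> (\<lambda>xs. col_sum r H (set xs \<inter> {..<n})) ` ?L"
  proof
    fix s assume "s \<in> vecs r"
    then obtain S where S: "S \<subseteq> {..<n}" "card S \<le> R" "s = col_sum r H S"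
      using assms by (auto simp: covers_def)
    have "finite S"
      using S(1) finite_subset by blast
    define xs where "xs = sorted_list_of_set S @ replicate (R - card S) n"
    have "xs \<in> ?L"
      using S(1,2) \<open>finite S\<close> by (auto simp: xs_def)
    moreover have "set xs \<inter> {..<n} = S"
      using S(1) \<open>finite S\<close> by (auto simp: xs_def)
    ultimately show "s \<in> (\<lambda>xs. col_sum r H (set xs \<inter> {..<n})) ` ?L"
      using S(3) by blast
  qed
  moreover have "finite ?L"
    by (simp add: finite_lists_length_eq)
  ultimately have "card (vecs r) \<le> card ?L"
    by (meson card_image_le card_mono finite_imageI order.trans)
  then show ?thesis
    by (simp add: card_vecs card_lists_length_eq)
qed

lemma cov_radius_eqI:
  assumes "covers r n H R" and "(n + 1) ^ (R - 1) < 2 ^ r"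
  shows "cov_radius r n H = R"
  unfolding cov_radius_def
proof (rule Least_equality)
  show "covers r n H R"
    by fact
  show "R \<le> R'" if "covers r n H R'" for R'
  proof (rule ccontr)
    assume "\<not> R \<le> R'"
    then have "covers r n H (R - 1)"
      by (intro covers_mono[OF that]) simp
    then have "2 ^ r \<le> (n + 1) ^ (R - 1)"
      by (rule covers_imp_two_power_le)
    with assms(2) show False
      by linarith
  qed
qed

section \<open>The field GF(32)\<close>

\<comment> \<open>GF(32) is \<open>F\<^sub>2[X] / (X\<^sup>5 + X\<^sup>2 + 1)\<close>; its elements are represented by the polynomials of
  degree below 5, the one with binary digits \<open>n\<close> being \<open>poly_of_bits n\<close>.\<close>
definition gf_mod :: "bit poly" where
  "gf_mod = [:1, 0, 1, 0, 0, 1:]"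

definition gf_elems :: "bit poly set" where
  "gf_elems = {p. degree p < 5}"

definition poly_of_bits :: "nat \<Rightarrow> bit poly" where
  "poly_of_bits n = Poly (map (\<lambda>i. of_bool (bit n i)) [0..<5])"

lemma degree_gf_mod: "degree gf_mod = 5"
  by (simp add: gf_mod_def)

lemma coeff_poly_of_bits: "coeff (poly_of_bits n) i = (if i < 5 then of_bool (bit n i) else 0)"
  by (simp add: poly_of_bits_def nth_default_def)

lemma poly_of_bits_eq_pCons:
  "poly_of_bits n =
     [:of_bool (bit n 0), of_bool (bit n 1), of_bool (bit n 2), of_bool (bit n 3), of_bool (bit n 4):]"
proof -
  have "[0..<5] = [0, 1, 2, 3, 4::nat]"
    by (simp add: upt_rec)
  then show ?thesis
    by (simp add: poly_of_bits_def)
qed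

lemma poly_of_bits_0 [simp]: "poly_of_bits 0 = 0"
  by (simp add: poly_of_bits_eq_pCons)

lemma Poly_in_gf_elems: "length xs \<le> 5 \<Longrightarrow> Poly xs \<in> gf_elems"
proof -
  assume "length xs \<le> 5"
  then have "degree (Poly xs) \<le> 4"
    by (intro degree_le) (simp add: nth_default_def)
  then show ?thesis
    by (simp add: gf_elems_def)
qed

lemma poly_of_bits_in_gf_elems: "poly_of_bits n \<in> gf_elems"
  unfolding poly_of_bits_def by (rule Poly_in_gf_elems) simp

lemma inj_on_poly_of_bits: "inj_on poly_of_bits {..<32}"
proof
  fix a b :: nat
  assume "a \<in> {..<32}" "b \<in> {..<32}" and eq: "poly_of_bits a = poly_of_bits b"
  show "a = b"
  proof (rule ccontr)
    assume "a \<noteq> b"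
    then obtain i where "i < 5" "bit a i \<noteq> bit b i"
      using ex_bit_neq_less[of a b 5] \<open>a \<in> {..<32}\<close> \<open>b \<in> {..<32}\<close> by auto
    then have "coeff (poly_of_bits a) i \<noteq> coeff (poly_of_bits b) i"
      by (simp add: coeff_poly_of_bits)
    with eq show False
      by simp
  qed
qed

lemma gf_elems_eq_image: "gf_elems = poly_of_bits ` {..<32}"
proof
  show "poly_of_bits ` {..<32} \<subseteq> gf_elems"
    using poly_of_bits_in_gf_elems by blast
  show "gf_elems \<subseteq> poly_of_bits ` {..<32}"
  proof
    fix p assume "p \<in> gf_elems"
    obtain n :: nat where n: "n < 2 ^ 5" "\<And>i. i < 5 \<Longrightarrow> bit n i \<longleftrightarrow> coeff p i = 1"
      using ex_less_power_with_bits[of 5 "\<lambda>i. coeff p i = 1"] by auto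
    moreover have "poly_of_bits n = p"
    proof (rule poly_eqI)
      fix i
      show "coeff (poly_of_bits n) i = coeff p i"
      proof (cases "i < 5")
        case True
        then show ?thesis
          using n(2)[OF True] by (cases "coeff p i") (simp_all add: coeff_poly_of_bits)
      next
        case False
        then show ?thesis
          using \<open>p \<in> gf_elems\<close> by (simp add: coeff_poly_of_bits gf_elems_def coeff_eq_0)
      qed
    qed
    ultimately show "p \<in> poly_of_bits ` {..<32}"
      by force
  qed
qed

lemma finite_gf_elems: "finite gf_elems"
  by (simp add: gf_elems_eq_image)

lemma mod_gf_mod_in_gf_elems: "p mod gf_mod \<in> gf_elems"
  using degree_mod_less[of gf_mod p] by (auto simp: gf_elems_def degree_gf_mod gf_mod_def)

lemma diff_in_gf_elems: "p \<in> gf_elems \<Longrightarrow> q \<in> gf_elems \<Longrightarrow> p - q \<in> gf_elems"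
  unfolding gf_elems_def using degree_diff_le_max by (fastforce intro: le_less_trans)

lemma gf_elems_eq_0_if_gf_mod_dvd: "p \<in> gf_elems \<Longrightarrow> gf_mod dvd p \<Longrightarrow> p = 0"
  using dvd_imp_degree_le[of gf_mod p] by (force simp: gf_elems_def degree_gf_mod)

lemma sum_mod_gf_mod:
  assumes "finite A"
  shows "(\<Sum>a\<in>A. f a mod gf_mod) = (\<Sum>a\<in>A. f a) mod gf_mod"
proof -
  have "degree (p mod gf_mod) \<le> 4" for p
    using mod_gf_mod_in_gf_elems[of p] by (simp add: gf_elems_def)
  then have "degree (\<Sum>a\<in>A. f a mod gf_mod) \<le> 4"
    using assms by (intro degree_sum_le)
  then have "(\<Sum>a\<in>A. f a mod gf_mod) = (\<Sum>a\<in>A. f a mod gf_mod) mod gf_mod"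
    by (simp add: mod_poly_less degree_gf_mod)
  also have "\<dots> = (\<Sum>a\<in>A. f a) mod gf_mod"
    by (rule mod_sum_eq)
  finally show ?thesis .
qed

\<comment> \<open>Triples \<open>(n, m, q)\<close> with \<open>x\<^sub>n x\<^sub>m = 1 + q \<cdot> gf_mod\<close>: every nonzero residue is invertible.\<close>
definition inverse_table :: "(nat \<times> nat \<times> bit poly) list" where
  "inverse_table =
    [(1, 1, 0), (2, 18, 1), (3, 28, 1), (4, 9, 1),
     (5, 23, [:0, 1:]), (6, 14, 1), (7, 12, 1), (8, 22, [:1, 0, 1:]),
     (9, 4, 1), (10, 25, [:1, 1, 1:]), (11, 16, [:1, 0, 1:]), (12, 7, 1),
     (13, 15, [:0, 1:]), (14, 6, 1), (15, 13, [:0, 1:]), (16, 11, [:1, 0, 1:]),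
     (17, 24, [:1, 0, 1, 1:]), (18, 2, 1), (19, 29, [:0, 1, 1, 1:]), (20, 30, [:1, 0, 1, 1:]),
     (21, 26, [:1, 1, 1, 1:]), (22, 8, [:1, 0, 1:]), (23, 5, [:0, 1:]), (24, 17, [:1, 0, 1, 1:]),
     (25, 10, [:1, 1, 1:]), (26, 21, [:1, 1, 1, 1:]), (27, 31, [:0, 0, 0, 1:]), (28, 3, 1),
     (29, 19, [:0, 1, 1, 1:]), (30, 20, [:1, 0, 1, 1:]), (31, 27, [:0, 0, 0, 1:])]"

lemma inverse_table_correct:
  "list_all (\<lambda>(n, m, q). poly_of_bits n * poly_of_bits m = 1 + gf_mod * q) inverse_table"
  by (simp add: inverse_table_def poly_of_bits_eq_pCons gf_mod_def one_pCons bit_0)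

lemma map_fst_inverse_table: "map fst inverse_table = [1..<32]"
  by (simp add: inverse_table_def upt_rec)

lemma gf_mod_dvd_mult_cancel:
  assumes "p \<in> gf_elems" "p \<noteq> 0" "gf_mod dvd p * b"
  shows "gf_mod dvd b"
proof -
  obtain n where n: "n < 32" "p = poly_of_bits n"
    using assms(1) by (auto simp: gf_elems_eq_image)
  moreover have "n \<noteq> 0"
    using assms(2) n(2) poly_of_bits_0 by metis
  ultimately have "n \<in> set (map fst inverse_table)"
    by (simp add: map_fst_inverse_table)
  then obtain m q where "(n, m, q) \<in> set inverse_table"
    by auto
  then have "p * poly_of_bits m = 1 + gf_mod * q"
    using inverse_table_correct n(2) by (auto simp: list_all_iff)
  then have "b = poly_of_bits m * (p * b) - gf_mod * (q * b)"
    by (simp add: algebra_simps)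
  also have "gf_mod dvd \<dots>"
    by (intro dvd_diff dvd_mult assms(3) dvd_triv_left)
  finally show ?thesis .
qed

lemma gf_mod_dvd_prod_mult_cancel:
  assumes "finite F" "\<And>j. j \<in> F \<Longrightarrow> f j \<in> gf_elems \<and> f j \<noteq> 0"
    and "gf_mod dvd (\<Prod>j\<in>F. f j) * b"
  shows "gf_mod dvd b"
  using assms
proof (induction F rule: finite_induct)
  case empty
  then show ?case
    by simp
next
  case (insert j F)
  then have "gf_mod dvd f j * ((\<Prod>j\<in>F. f j) * b)"
    by (simp add: mult.assoc)
  then have "gf_mod dvd (\<Prod>j\<in>F. f j) * b"
    using insert.prems(1) gf_mod_dvd_mult_cancel by blast
  then show ?case
    using insert.IH insert.prems(1) by blast
qed

section \<open>Vandermonde systems\<close>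

lemma poly_eq_sum_lessThan:
  fixes p :: "'a::comm_semiring_1 poly"
  assumes "degree p < n"
  shows "poly p y = (\<Sum>k<n. coeff p k * y ^ k)"
proof -
  have "poly p y = (\<Sum>k\<le>degree p. coeff p k * y ^ k)"
    by (rule poly_altdef)
  also have "\<dots> = (\<Sum>k<n. coeff p k * y ^ k)"
    using assms by (intro sum.mono_neutral_left) (auto simp: coeff_eq_0)
  finally show ?thesis .
qed

lemma dvd_vandermonde_elim:
  fixes x w :: "'i \<Rightarrow> 'a::comm_ring_1"
  assumes "finite A" "i \<in> A"
    and dvd: "\<And>k. k < card A \<Longrightarrow> p dvd (\<Sum>l\<in>A. x l ^ k * w l)"
  shows "p dvd (\<Prod>j\<in>A - {i}. x i - x j) * w i"
proof -
  \<comment> \<open>apply the linear functional given by the coefficients of \<open>\<Prod>j\<noteq>i. (X - x j)\<close>, which kills every \<open>w l\<close> with \<open>l \<noteq> i\<close>\<close>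
  define q where "q = (\<Prod>j\<in>A - {i}. [:- x j, 1:])"
  have poly_q: "poly q y = (\<Prod>j\<in>A - {i}. y - x j)" for y
    by (simp add: q_def poly_prod)
  have "degree q \<le> card (A - {i})"
    using degree_prod_sum_le[of "A - {i}" "\<lambda>j. [:- x j, 1:]"] assms(1) by (simp add: q_def)
  also have "\<dots> < card A"
    using assms(1,2) card_gt_0_iff[of A] by (auto simp: card_Diff_singleton)
  finally have deg: "degree q < card A" .
  have "(\<Prod>j\<in>A - {i}. x i - x j) * w i = (\<Sum>l\<in>A. poly q (x l) * w l)"
  proof -
    have "poly q (x l) = 0" if "l \<in> A - {i}" for l
      using that assms(1) unfolding poly_q by (intro prod_zero) auto
    then have "(\<Sum>l\<in>A. poly q (x l) * w l) = poly q (x i) * w i"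
      using assms(1,2) by (simp add: sum.remove)
    then show ?thesis
      by (simp add: poly_q)
  qed
  also have "\<dots> = (\<Sum>k<card A. coeff q k * (\<Sum>l\<in>A. x l ^ k * w l))"
    by (simp add: poly_eq_sum_lessThan[OF deg] sum_distrib_left sum_distrib_right mult.assoc
        sum.swap[of _ A])
  also have "p dvd \<dots>"
    by (intro dvd_sum dvd_mult dvd) simp
  finally show ?thesis .
qed

definition power_sums :: "'i set \<Rightarrow> ('i \<Rightarrow> bit poly) \<Rightarrow> ('i \<Rightarrow> bit poly) \<Rightarrow> nat \<Rightarrow> bit poly" where
  "power_sums A x w = (\<lambda>k\<in>{..<card A}. (\<Sum>l\<in>A. x l ^ k * w l) mod gf_mod)"

lemma inj_on_power_sums:
  assumes "finite A" "inj_on x A" "x ` A \<subseteq> gf_elems"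
  shows "inj_on (power_sums A x) (A \<rightarrow>\<^sub>E gf_elems)"
proof
  fix w v assume w: "w \<in> A \<rightarrow>\<^sub>E gf_elems" and v: "v \<in> A \<rightarrow>\<^sub>E gf_elems"
    and eq: "power_sums A x w = power_sums A x v"
  show "w = v"
  proof (rule PiE_ext[OF w v])
    fix i assume "i \<in> A"
    have "gf_mod dvd (\<Sum>l\<in>A. x l ^ k * (w l - v l))" if "k < card A" for k
    proof -
      have "(\<Sum>l\<in>A. x l ^ k * w l) mod gf_mod = (\<Sum>l\<in>A. x l ^ k * v l) mod gf_mod"
        using fun_cong[OF eq, of k] that by (simp add: power_sums_def)
      then show ?thesis
        by (simp add: mod_eq_dvd_iff right_diff_distrib sum_subtractf)
    qed
    then have dvd_prod: "gf_mod dvd (\<Prod>j\<in>A - {i}. x i - x j) * (w i - v i)"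
      by (rule dvd_vandermonde_elim[OF assms(1) \<open>i \<in> A\<close>])
    have nonzero: "x i - x j \<in> gf_elems \<and> x i - x j \<noteq> 0" if "j \<in> A - {i}" for j
      using that assms(2,3) \<open>i \<in> A\<close> by (auto intro: diff_in_gf_elems dest: inj_onD)
    have "gf_mod dvd w i - v i"
      using nonzero dvd_prod by (rule gf_mod_dvd_prod_mult_cancel[OF finite_Diff[OF assms(1)]])
    moreover have "w i - v i \<in> gf_elems"
      using w v \<open>i \<in> A\<close> by (auto intro: diff_in_gf_elems)
    ultimately have "w i - v i = 0"
      by (rule gf_elems_eq_0_if_gf_mod_dvd[rotated])
    then show "w i = v i"
      by simp
  qed
qed

lemma power_sums_solvable:
  assumes "finite A" "inj_on x A" "x ` A \<subseteq> gf_elems"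
    and "t \<in> {..<card A} \<rightarrow>\<^sub>E gf_elems"
  obtains w where "w \<in> A \<rightarrow>\<^sub>E gf_elems" "power_sums A x w = t"
proof -
  let ?S = "A \<rightarrow>\<^sub>E gf_elems" and ?T = "{..<card A} \<rightarrow>\<^sub>E gf_elems"
  have "power_sums A x w \<in> ?T" for w
    unfolding power_sums_def restrict_PiE_iff using mod_gf_mod_in_gf_elems by blast
  then have "power_sums A x ` ?S \<subseteq> ?T"
    by blast
  moreover have "card (power_sums A x ` ?S) = card ?T"
    using card_image[OF inj_on_power_sums[OF assms(1-3)]] assms(1) by (simp add: card_PiE)
  ultimately have "power_sums A x ` ?S = ?T"
    by (rule card_subset_eq[rotated]) (simp add: finite_PiE finite_gf_elems)
  then have "t \<in> power_sums A x ` ?S"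
    using assms(4) by simp
  then show ?thesis
    using that by blast
qed

section \<open>Four top columns sum to any 11-bit vector\<close>

definition top_cols :: "nat list" where
  "top_cols = [1776, 551, 1347, 1543, 1365, 717, 488, 782, 23, 2042, 1656,
               989, 1635, 917, 1550, 943, 739, 1901, 1232, 298, 849, 1239]"

lemma top_cols_nth:
  "top_cols ! 0 = 1776"
  "top_cols ! Suc 0 = 551"
  "top_cols ! 2 = 1347"
  "top_cols ! 3 = 1543"
  "top_cols ! 4 = 1365"
  "top_cols ! 5 = 717"
  "top_cols ! 6 = 488"
  "top_cols ! 7 = 782"
  "top_cols ! 8 = 23"
  "top_cols ! 9 = 2042"
  "top_cols ! 10 = 1656"
  "top_cols ! 11 = 989"
  "top_cols ! 12 = 1635"
  "top_cols ! 13 = 917"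
  "top_cols ! 14 = 1550"
  "top_cols ! 15 = 943"
  "top_cols ! 16 = 739"
  "top_cols ! 17 = 1901"
  "top_cols ! 18 = 1232"
  "top_cols ! 19 = 298"
  "top_cols ! 20 = 849"
  "top_cols ! 21 = 1239"
  by (simp_all add: top_cols_def)

fun quad_sums_to :: "nat \<Rightarrow> nat \<times> nat \<times> nat \<times> nat \<Rightarrow> bool" where
  "quad_sums_to s (a, b, c, d) \<longleftrightarrow> a < b \<and> b < c \<and> c < d \<and> d < 21 \<and>
     xor (top_cols ! a) (xor (top_cols ! b) (xor (top_cols ! c) (top_cols ! d))) = s"

datatype quad_tree = Leaf "nat \<times> nat \<times> nat \<times> nat" | Node quad_tree quad_tree

fun valid_tree :: "nat \<Rightarrow> nat \<Rightarrow> quad_tree \<Rightarrow> bool" where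
  "valid_tree k s (Leaf q) \<longleftrightarrow> k = 0 \<and> quad_sums_to s q"
| "valid_tree k s (Node l r) \<longleftrightarrow>
     0 < k \<and> valid_tree (k - 1) s l \<and> valid_tree (k - 1) (s + 2 ^ (k - 1)) r"

lemma valid_tree_covers:
  "valid_tree k s t \<Longrightarrow> s \<le> s' \<Longrightarrow> s' < s + 2 ^ k \<Longrightarrow> \<exists>q. quad_sums_to s' q"
proof (induction t arbitrary: k s)
  case (Leaf q)
  then have "s' = s" "quad_sums_to s q"
    by simp_all
  then show ?case
    by blast
next
  case (Node l r)
  then obtain k' where k: "k = Suc k'"
    by (cases k) auto
  show ?case
  proof (cases "s' < s + 2 ^ k'")
    case True
    then show ?thesis
      using Node k by (intro Node.IH(1)[of k' s]) simp_all
  next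
    case False
    then show ?thesis
      using Node k by (intro Node.IH(2)[of k' "s + 2 ^ k'"]) simp_all
  qed
qed

\<comment> \<open>Leaf number \<open>s\<close>, counted from the left, holds indices \<open>a < b < c < d < 21\<close> with
  \<open>h\<^sub>a + h\<^sub>b + h\<^sub>c + h\<^sub>d = s\<close>; the tree is a computer-generated certificate.\<close>
definition cover_tree :: quad_tree where
  "cover_tree = Node (Node (Node (Node (Node (Node (Node (Node (Node (Node (Node (Leaf (0, 14, 15, 20)) (Leaf (0, 5, 17, 20))) (Node (Leaf (2, 3, 8, 20)) (Leaf (8, 11, 16, 19)))) (Node (Node (Leaf (0, 7, 18, 19)) (Leaf (1, 6, 8, 11))) (Node (Leaf (1, 6, 16, 19)) (Leaf (1, 3, 9, 11))))) (Node (Node (Node (Leaf (0, 7, 12, 13)) (Leaf (0, 3, 15, 20))) (Node (Leaf (1, 9, 10, 15)) (Leaf (0, 2, 8, 15)))) (Node (Node (Leaf (7, 9, 13, 17)) (Leaf (1, 4, 15, 18))) (Node (Leaf (0, 2, 17, 18)) (Leaf (2, 5, 18, 20)))))) (Node (Node (Node (Node (Leaf (0, 1, 8, 18)) (Leaf (1, 9, 12, 15))) (Node (Leaf (3, 10, 12, 14)) (Leaf (0, 7, 10, 13)))) (Node (Node (Leaf (0, 1, 5, 14)) (Leaf (0, 1, 15, 17))) (Node (Leaf (3, 11, 12, 15)) (Leaf (1, 7, 11, 16))))) (Node (Node (Node (Leaf (0, 4, 17, 18)) (Leaf (4, 5, 18, 20))) (Node (Leaf (0, 5, 9, 11)) (Leaf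 (1, 2, 15, 18)))) (Node (Node (Leaf (1, 3, 17, 20)) (Leaf (0, 1, 3, 5))) (Node (Leaf (1, 2, 8, 17)) (Leaf (0, 9, 10, 17))))))) (Node (Node (Node (Node (Node (Leaf (1, 4, 10, 19)) (Leaf (1, 2, 13, 18))) (Node (Leaf (2, 7, 8, 10)) (Leaf (0, 1, 7, 9)))) (Node (Node (Leaf (0, 3, 7, 11)) (Leaf (11, 12, 13, 14))) (Node (Leaf (3, 15, 16, 17)) (Leaf (0, 4, 8, 13))))) (Node (Node (Node (Leaf (1, 5, 6, 19)) (Leaf (0, 7, 10, 15))) (Node (Leaf (4, 9, 15, 19)) (Leaf (1, 9, 12, 13)))) (Node (Node (Leaf (2, 4, 13, 15)) (Leaf (0, 7, 11, 14))) (Node (Leaf (1, 5, 13, 20)) (Leaf (0, 1, 13, 17)))))) (Node (Node (Node (Node (Leaf (1, 9, 10, 13)) (Leaf (0, 2, 8, 13))) (Node (Leaf (0, 7, 12, 15)) (Leaf (0, 1, 3, 16)))) (Node (Node (Leaf (0, 9, 11, 16)) (Leaf (0, 3, 6, 19))) (Node (Leaf (1, 2, 10, 19)) (Leaf (0, 8, 9, 19))))) (Node (Node (Node (Leaf (2, 4, 5, 16)) (Leaf (1, 5, 7, 11))) (Node (Leaf (0, 1, 14, 16)) (Leaf (1, 4, 12, 19)))) (Node (Node (Leaf (0, 6, 14, 19)) (Leaf (4, 6, 12, 16))) (Node (Leaf (3, 5, 7, 9)) (Leaf (8, 13, 17, 18)))))))) (Node (Node (Node (Node (Node (Node (Leaf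 (0, 7, 11, 12)) (Leaf (3, 11, 13, 14))) (Node (Leaf (0, 4, 5, 19)) (Leaf (1, 3, 7, 17)))) (Node (Node (Leaf (7, 9, 11, 17)) (Leaf (3, 10, 13, 15))) (Node (Leaf (0, 9, 15, 16)) (Leaf (8, 12, 16, 18))))) (Node (Node (Node (Leaf (1, 11, 16, 20)) (Leaf (1, 2, 3, 19))) (Node (Leaf (0, 6, 10, 19)) (Leaf (1, 5, 7, 15)))) (Node (Node (Leaf (0, 1, 10, 16)) (Leaf (1, 6, 8, 13))) (Node (Leaf (2, 9, 11, 19)) (Leaf (1, 3, 9, 13)))))) (Node (Node (Node (Node (Leaf (2, 5, 7, 18)) (Leaf (0, 6, 12, 19))) (Node (Leaf (0, 5, 9, 13)) (Leaf (1, 9, 16, 17)))) (Node (Node (Leaf (0, 2, 5, 19)) (Leaf (2, 17, 19, 20))) (Node (Leaf (0, 3, 7, 15)) (Leaf (0, 1, 12, 16))))) (Node (Node (Node (Leaf (4, 9, 11, 19)) (Leaf (3, 4, 6, 16))) (Node (Leaf (5, 7, 9, 12)) (Leaf (0, 7, 10, 11)))) (Node (Node (Leaf (5, 11, 15, 16)) (Leaf (0, 6, 13, 18))) (Node (Leaf (0, 5, 7, 17)) (Leaf (0, 7, 14, 15))))))) (Node (Node (Node (Node (Node (Leaf (0, 3, 9, 17)) (Leaf (2, 3, 5, 6))) (Node (Leaf (0, 1, 5, 10)) (Leaf (1, 9, 11, 12)))) (Node (Node (Leaf (2, 4, 11, 15)) (Leaf (0, 7, 13, 14))) (Node (Leaf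 (1, 5, 11, 20)) (Leaf (0, 1, 11, 17))))) (Node (Node (Node (Leaf (0, 5, 9, 15)) (Leaf (0, 9, 14, 17))) (Node (Leaf (0, 1, 4, 6)) (Leaf (4, 8, 10, 20)))) (Node (Node (Leaf (0, 3, 7, 13)) (Leaf (0, 12, 15, 20))) (Node (Leaf (2, 3, 9, 18)) (Leaf (0, 4, 8, 11)))))) (Node (Node (Node (Node (Leaf (0, 7, 16, 17)) (Leaf (1, 5, 7, 13))) (Node (Leaf (0, 11, 14, 20)) (Leaf (5, 11, 14, 17)))) (Node (Node (Leaf (7, 9, 12, 16)) (Leaf (1, 3, 9, 15))) (Node (Leaf (0, 10, 15, 20)) (Leaf (1, 6, 8, 15))))) (Node (Node (Node (Leaf (1, 9, 10, 11)) (Leaf (0, 1, 5, 12))) (Node (Leaf (0, 2, 16, 19)) (Leaf (0, 3, 11, 20)))) (Node (Node (Leaf (0, 1, 2, 6)) (Leaf (1, 5, 9, 17))) (Node (Leaf (2, 7, 16, 18)) (Leaf (1, 4, 11, 18))))))))) (Node (Node (Node (Node (Node (Node (Node (Leaf (0, 4, 5, 6)) (Leaf (0, 3, 10, 14))) (Node (Leaf (0, 1, 9, 15)) (Leaf (1, 8, 12, 18)))) (Node (Node (Leaf (2, 14, 16, 19)) (Leaf (0, 2, 4, 12))) (Node (Leaf (1, 12, 15, 17)) (Leaf (1, 5, 12, 14))))) (Node (Node (Node (Leaf (10, 14, 15, 20)) (Leaf (1, 2, 8, 9))) (Node (Leaf (6, 11, 13, 19)) (Leaf (1, 2, 3, 6))))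 (Node (Node (Leaf (0, 11, 14, 15)) (Leaf (0, 5, 11, 17))) (Node (Leaf (1, 3, 5, 12)) (Leaf (0, 4, 9, 18)))))) (Node (Node (Node (Node (Leaf (1, 3, 11, 17)) (Leaf (2, 13, 17, 19))) (Node (Leaf (3, 7, 13, 14)) (Leaf (12, 14, 15, 20)))) (Node (Node (Leaf (1, 4, 6, 14)) (Leaf (1, 3, 5, 10))) (Node (Leaf (0, 2, 5, 6)) (Leaf (2, 6, 17, 20))))) (Node (Node (Node (Leaf (1, 5, 11, 15)) (Leaf (0, 2, 9, 18))) (Node (Leaf (0, 3, 12, 14)) (Leaf (1, 7, 16, 20)))) (Node (Node (Leaf (1, 5, 10, 14)) (Leaf (1, 3, 4, 6))) (Node (Leaf (0, 2, 4, 10)) (Leaf (0, 13, 18, 19))))))) (Node (Node (Node (Node (Node (Leaf (0, 8, 17, 19)) (Leaf (0, 7, 14, 20))) (Node (Leaf (1, 5, 11, 13)) (Leaf (0, 11, 16, 17)))) (Node (Node (Leaf (7, 8, 17, 18)) (Leaf (0, 15, 18, 19))) (Node (Leaf (0, 5, 10, 16)) (Leaf (1, 10, 13, 17))))) (Node (Node (Node (Leaf (0, 1, 4, 19)) (Leaf (0, 12, 13, 15))) (Node (Leaf (0, 2, 7, 8)) (Leaf (1, 7, 9, 10)))) (Node (Node (Leaf (1, 4, 7, 18)) (Leaf (2, 11, 16, 18))) (Node (Leaf (0, 4, 6, 16)) (Leaf (4, 8, 10, 13)))))) (Node (Node (Node (Node (Leaf (1, 7, 9, 12)) (Leaf (3,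 9, 15, 16))) (Node (Leaf (0, 10, 13, 15)) (Leaf (6, 8, 15, 16)))) (Node (Node (Leaf (0, 1, 7, 17)) (Leaf (1, 5, 7, 20))) (Node (Leaf (0, 11, 13, 14)) (Leaf (2, 4, 7, 15))))) (Node (Node (Node (Leaf (0, 1, 9, 13)) (Leaf (2, 8, 10, 13))) (Node (Leaf (1, 2, 7, 18)) (Leaf (1, 3, 10, 16)))) (Node (Node (Leaf (0, 4, 7, 8)) (Leaf (0, 5, 12, 16))) (Node (Leaf (0, 1, 2, 19)) (Leaf (0, 3, 11, 13)))))))) (Node (Node (Node (Node (Node (Node (Leaf (0, 10, 11, 13)) (Leaf (5, 9, 12, 13))) (Node (Leaf (2, 9, 19, 20)) (Leaf (3, 9, 11, 16)))) (Node (Node (Leaf (0, 13, 14, 15)) (Leaf (0, 5, 13, 17))) (Node (Leaf (0, 6, 7, 18)) (Leaf (1, 8, 11, 19))))) (Node (Node (Node (Leaf (2, 6, 7, 17)) (Leaf (0, 5, 7, 9))) (Node (Leaf (4, 5, 10, 19)) (Leaf (2, 5, 13, 18)))) (Node (Node (Leaf (0, 7, 12, 20)) (Leaf (0, 3, 13, 15))) (Node (Leaf (6, 12, 13, 18)) (Leaf (2, 8, 13, 14)))))) (Node (Node (Node (Node (Leaf (0, 5, 14, 16)) (Leaf (0, 15, 16, 17))) (Node (Leaf (1, 2, 4, 16)) (Leaf (10, 18, 19, 20)))) (Node (Node (Leaf (0, 8, 16, 18)) (Leaf (6, 10, 13, 18))) (Node (Leaf (1, 6, 7, 8)) (Leaf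 (0, 7, 10, 20))))) (Node (Node (Node (Leaf (1, 3, 13, 17)) (Leaf (0, 3, 5, 16))) (Node (Leaf (2, 8, 16, 17)) (Leaf (0, 11, 12, 13)))) (Node (Node (Leaf (2, 5, 10, 19)) (Leaf (1, 7, 9, 14))) (Node (Leaf (3, 7, 10, 15)) (Leaf (1, 10, 12, 16))))))) (Node (Node (Node (Node (Node (Leaf (5, 9, 10, 15)) (Leaf (0, 2, 3, 4))) (Node (Leaf (1, 3, 15, 17)) (Leaf (0, 4, 8, 20)))) (Node (Node (Leaf (3, 7, 10, 13)) (Leaf (0, 10, 12, 14))) (Node (Leaf (4, 14, 17, 18)) (Leaf (0, 7, 9, 16))))) (Node (Node (Node (Leaf (0, 2, 4, 14)) (Leaf (2, 12, 16, 19))) (Node (Leaf (2, 8, 11, 12)) (Leaf (0, 1, 17, 20)))) (Node (Node (Leaf (0, 3, 10, 12)) (Leaf (3, 5, 9, 11))) (Node (Leaf (1, 8, 14, 18)) (Leaf (1, 2, 6, 12)))))) (Node (Node (Node (Node (Leaf (0, 1, 9, 11)) (Leaf (1, 5, 10, 12))) (Node (Leaf (2, 10, 16, 19)) (Leaf (1, 4, 18, 20)))) (Node (Node (Leaf (1, 2, 6, 10)) (Leaf (0, 2, 8, 20))) (Node (Leaf (3, 5, 17, 20)) (Leaf (3, 14, 15, 20))))) (Node (Node (Node (Leaf (6, 13, 15, 19)) (Leaf (1, 4, 6, 12))) (Node (Leaf (0, 5, 8, 18)) (Leaf (5, 9, 12, 15)))) (Node (Node (Leaf (1, 2, 4, 5))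 (Leaf (5, 7, 11, 16))) (Node (Leaf (1, 13, 15, 16)) (Leaf (0, 5, 15, 17)))))))))) (Node (Node (Node (Node (Node (Node (Node (Node (Leaf (0, 1, 10, 15)) (Leaf (0, 6, 8, 14))) (Node (Leaf (7, 9, 12, 13)) (Leaf (0, 3, 9, 14)))) (Node (Node (Leaf (0, 1, 11, 14)) (Leaf (0, 5, 6, 18))) (Node (Leaf (0, 7, 13, 17)) (Leaf (1, 5, 7, 16))))) (Node (Node (Node (Leaf (0, 3, 6, 8)) (Leaf (1, 3, 10, 20))) (Node (Leaf (0, 2, 6, 20)) (Leaf (1, 2, 8, 10)))) (Node (Node (Leaf (0, 2, 13, 19)) (Leaf (0, 1, 3, 11))) (Node (Leaf (2, 6, 10, 11)) (Leaf (0, 5, 12, 20)))))) (Node (Node (Node (Node (Leaf (1, 2, 8, 12)) (Leaf (0, 9, 10, 12))) (Node (Leaf (1, 3, 12, 20)) (Leaf (0, 7, 14, 16)))) (Node (Node (Leaf (0, 5, 10, 20)) (Leaf (1, 5, 6, 8))) (Node (Leaf (0, 4, 12, 18)) (Leaf (1, 3, 5, 9))))) (Node (Node (Node (Leaf (1, 3, 6, 18)) (Leaf (3, 5, 11, 14))) (Node (Leaf (0, 3, 7, 16)) (Leaf (0, 1, 12, 15)))) (Node (Node (Leaf (0, 2, 4, 9)) (Leaf (1, 4, 8, 10))) (Node (Leaf (1, 5, 9, 14)) (Leaf (1, 9, 15, 17))))))) (Node (Node (Node (Node (Node (Leaf (0, 4, 15, 19)) (Leaf (0, 1, 12, 13)))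 (Node (Leaf (3, 11, 13, 17)) (Leaf (1, 2, 17, 19)))) (Node (Node (Leaf (0, 5, 9, 16)) (Leaf (1, 9, 13, 17))) (Node (Leaf (4, 6, 13, 14)) (Leaf (3, 5, 10, 13))))) (Node (Node (Node (Leaf (2, 4, 11, 16)) (Leaf (3, 4, 19, 20))) (Node (Leaf (5, 11, 13, 15)) (Leaf (0, 6, 16, 18)))) (Node (Node (Leaf (6, 7, 8, 11)) (Leaf (0, 1, 18, 19))) (Node (Leaf (3, 7, 9, 11)) (Leaf (3, 4, 6, 13)))))) (Node (Node (Node (Node (Leaf (0, 9, 13, 15)) (Leaf (8, 12, 13, 18))) (Node (Leaf (1, 7, 10, 12)) (Leaf (3, 10, 15, 16)))) (Node (Node (Leaf (0, 3, 5, 7)) (Leaf (1, 4, 17, 19))) (Node (Leaf (0, 2, 15, 19)) (Leaf (2, 7, 8, 17))))) (Node (Node (Node (Leaf (1, 6, 11, 19)) (Leaf (0, 7, 8, 18))) (Node (Leaf (0, 1, 10, 13)) (Leaf (1, 6, 8, 16)))) (Node (Node (Leaf (0, 7, 15, 17)) (Leaf (0, 5, 7, 14))) (Node (Leaf (1, 11, 13, 20)) (Leaf (1, 2, 4, 7)))))))) (Node (Node (Node (Node (Node (Node (Leaf (2, 7, 11, 18)) (Leaf (1, 4, 16, 18))) (Node (Leaf (0, 9, 11, 13)) (Leaf (0, 4, 6, 7)))) (Node (Node (Leaf (0, 2, 11, 19)) (Leaf (0, 1, 3, 13))) (Node (Leaf (1, 9, 10, 16)) (Leaf (0, 2, 8,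 16))))) (Node (Node (Node (Leaf (4, 5, 9, 19)) (Leaf (8, 16, 17, 18))) (Node (Leaf (1, 6, 15, 19)) (Leaf (0, 5, 7, 10)))) (Node (Node (Leaf (0, 1, 13, 14)) (Leaf (1, 3, 7, 12))) (Node (Leaf (0, 7, 11, 17)) (Leaf (5, 7, 11, 20)))))) (Node (Node (Node (Node (Leaf (0, 5, 7, 12)) (Leaf (0, 4, 8, 16))) (Node (Leaf (0, 4, 11, 19)) (Leaf (11, 12, 14, 16)))) (Node (Node (Leaf (5, 7, 9, 17)) (Leaf (0, 2, 6, 7))) (Node (Leaf (1, 3, 7, 10)) (Leaf (1, 2, 16, 18))))) (Node (Node (Node (Leaf (1, 5, 16, 20)) (Leaf (0, 1, 16, 17))) (Node (Leaf (2, 4, 15, 16)) (Leaf (1, 7, 11, 15)))) (Node (Node (Leaf (3, 7, 9, 15)) (Leaf (1, 9, 12, 16))) (Node (Leaf (2, 5, 9, 19)) (Leaf (0, 6, 17, 19))))))) (Node (Node (Node (Node (Node (Leaf (1, 2, 4, 20)) (Leaf (1, 7, 11, 13))) (Node (Leaf (0, 5, 14, 20)) (Leaf (0, 15, 17, 20)))) (Node (Node (Leaf (0, 2, 3, 18)) (Leaf (0, 7, 10, 16))) (Node (Leaf (0, 8, 18, 20)) (Leaf (0, 9, 12, 14))))) (Node (Node (Node (Leaf (1, 5, 9, 10)) (Leaf (0, 1, 11, 12))) (Node (Leaf (4, 6, 10, 15)) (Leaf (0, 3, 5, 20)))) (Node (Node (Leaf (0, 6, 8, 12)) (Leaf (0,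 2, 14, 18))) (Node (Leaf (0, 3, 9, 12)) (Leaf (1, 4, 5, 18)))))) (Node (Node (Node (Node (Leaf (1, 6, 13, 19)) (Leaf (2, 3, 6, 11))) (Node (Leaf (0, 1, 10, 11)) (Leaf (1, 5, 9, 12)))) (Node (Node (Leaf (1, 2, 3, 8)) (Leaf (0, 3, 9, 10))) (Node (Leaf (0, 1, 14, 15)) (Leaf (0, 1, 5, 17))))) (Node (Node (Node (Leaf (0, 9, 11, 15)) (Leaf (1, 2, 5, 18))) (Node (Leaf (7, 9, 16, 17)) (Leaf (0, 4, 14, 18)))) (Node (Node (Leaf (0, 9, 10, 14)) (Leaf (1, 2, 8, 14))) (Node (Leaf (0, 7, 12, 16)) (Leaf (0, 1, 3, 15))))))))) (Node (Node (Node (Node (Node (Node (Node (Leaf (1, 3, 5, 17)) (Leaf (0, 1, 3, 20))) (Node (Leaf (2, 6, 10, 20)) (Leaf (0, 1, 2, 8)))) (Node (Node (Leaf (2, 10, 13, 19)) (Leaf (1, 3, 10, 11))) (Node (Leaf (0, 2, 6, 11)) (Leaf (5, 9, 11, 17))))) (Node (Node (Node (Leaf (0, 1, 14, 20)) (Leaf (1, 5, 14, 17))) (Node (Leaf (2, 4, 5, 20)) (Leaf (0, 2, 4, 17)))) (Node (Node (Leaf (1, 10, 11, 14)) (Leaf (1, 8, 17, 18))) (Node (Leaf (6, 15, 16, 19)) (Leaf (2, 4, 9, 12)))))) (Node (Node (Node (Node (Leaf (0, 4, 6, 11)) (Leaf (0, 7, 9, 13))) (Node (Leaf (3, 7, 10,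 16)) (Leaf (1, 10, 12, 15)))) (Node (Node (Leaf (0, 3, 14, 17)) (Leaf (0, 1, 4, 8))) (Node (Leaf (2, 8, 15, 17)) (Leaf (0, 2, 7, 19))))) (Node (Node (Node (Leaf (0, 5, 10, 11)) (Leaf (2, 6, 12, 20))) (Node (Leaf (2, 3, 14, 18)) (Leaf (3, 6, 8, 12)))) (Node (Node (Leaf (0, 5, 14, 15)) (Leaf (14, 15, 17, 20))) (Node (Leaf (1, 2, 4, 15)) (Leaf (2, 12, 13, 19))))))) (Node (Node (Node (Node (Node (Leaf (2, 7, 8, 9)) (Leaf (0, 1, 7, 10))) (Node (Leaf (0, 8, 13, 18)) (Leaf (6, 10, 16, 18)))) (Node (Node (Leaf (1, 2, 4, 13)) (Leaf (1, 7, 11, 20))) (Node (Leaf (0, 5, 13, 14)) (Leaf (0, 13, 15, 17))))) (Node (Node (Node (Leaf (3, 6, 17, 19)) (Leaf (1, 10, 12, 13))) (Node (Leaf (7, 8, 12, 18)) (Leaf (0, 7, 9, 15)))) (Node (Node (Leaf (2, 8, 13, 17)) (Leaf (0, 11, 12, 16))) (Node (Leaf (0, 8, 12, 19)) (Leaf (0, 3, 5, 13)))))) (Node (Node (Node (Node (Leaf (2, 3, 8, 16)) (Leaf (5, 7, 11, 15))) (Node (Leaf (0, 14, 15, 16)) (Leaf (0, 5, 16, 17)))) (Node (Node (Leaf (1, 2, 9, 19)) (Leaf (0, 8, 10, 19))) (Node (Leaf (0, 10, 11, 16)) (Leaf (5, 9, 12, 16))))) (Node (Node (Node (Leaf (6,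 12, 16, 18)) (Leaf (2, 8, 14, 16))) (Node (Leaf (0, 1, 7, 12)) (Leaf (0, 3, 15, 16)))) (Node (Node (Leaf (3, 5, 7, 10)) (Leaf (2, 5, 16, 18))) (Node (Leaf (1, 7, 9, 17)) (Leaf (4, 13, 15, 18)))))))) (Node (Node (Node (Node (Node (Node (Leaf (0, 11, 14, 16)) (Leaf (2, 3, 15, 19))) (Node (Leaf (0, 7, 17, 20)) (Leaf (0, 8, 14, 19)))) (Node (Node (Leaf (0, 10, 15, 16)) (Leaf (6, 8, 13, 15))) (Node (Leaf (2, 6, 7, 12)) (Leaf (0, 5, 18, 19))))) (Node (Node (Node (Leaf (0, 2, 19, 20)) (Leaf (0, 3, 11, 16))) (Node (Leaf (0, 3, 8, 19)) (Leaf (0, 5, 12, 13)))) (Node (Node (Leaf (2, 7, 18, 20)) (Leaf (1, 3, 10, 13))) (Node (Leaf (0, 1, 9, 16)) (Leaf (2, 8, 10, 16)))))) (Node (Node (Node (Node (Leaf (0, 5, 10, 13)) (Leaf (1, 10, 16, 17))) (Node (Leaf (5, 6, 11, 19)) (Leaf (1, 14, 18, 19)))) (Node (Node (Leaf (1, 5, 11, 16)) (Leaf (0, 11, 13, 17))) (Node (Leaf (1, 3, 12, 13)) (Leaf (0, 1, 7, 14))))) (Node (Node (Node (Leaf (0, 4, 6, 13)) (Leaf (0, 7, 9, 11))) (Node (Leaf (1, 3, 18, 19)) (Leaf (2, 11, 13, 18)))) (Node (Node (Leaf (3, 6, 16, 18)) (Leaf (2, 6, 7, 10))) (Node (Leaf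 (0, 1, 3, 7)) (Leaf (0, 12, 15, 16))))))) (Node (Node (Node (Node (Node (Leaf (0, 1, 5, 9)) (Leaf (1, 2, 6, 17))) (Node (Leaf (0, 3, 10, 17)) (Leaf (3, 5, 10, 20)))) (Node (Node (Leaf (1, 5, 12, 17)) (Leaf (0, 1, 12, 20))) (Node (Leaf (3, 9, 10, 12)) (Leaf (0, 3, 5, 11))))) (Node (Node (Node (Leaf (4, 12, 14, 18)) (Leaf (0, 16, 18, 19))) (Node (Leaf (0, 5, 10, 15)) (Leaf (0, 10, 14, 17)))) (Node (Node (Leaf (1, 2, 4, 11)) (Leaf (1, 7, 13, 20))) (Node (Leaf (0, 5, 11, 14)) (Leaf (0, 1, 6, 18)))))) (Node (Node (Node (Node (Leaf (0, 12, 14, 17)) (Leaf (0, 5, 12, 15))) (Node (Leaf (2, 13, 14, 19)) (Leaf (1, 3, 11, 14)))) (Node (Node (Leaf (0, 2, 6, 15)) (Leaf (5, 9, 15, 17))) (Node (Leaf (3, 6, 8, 14)) (Leaf (1, 3, 10, 15))))) (Node (Node (Node (Leaf (3, 5, 12, 20)) (Leaf (0, 3, 12, 17))) (Node (Leaf (2, 5, 8, 12)) (Leaf (2, 3, 13, 19)))) (Node (Node (Leaf (6, 11, 16, 19)) (Leaf (2, 3, 6, 20))) (Node (Leaf (0, 1, 10, 20)) (Leaf (1, 5, 10, 17))))))))))) (Node (Node (Node (Node (Node (Node (Node (Node (Node (Leaf (0, 3, 11, 19)) (Leaf (0, 1, 2, 13))) (Node (Leaf (3, 6, 10, 13)) (Leaf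 (0, 3, 8, 16)))) (Node (Node (Leaf (1, 4, 7, 10)) (Leaf (2, 10, 11, 16))) (Node (Leaf (2, 8, 10, 19)) (Leaf (0, 1, 9, 19))))) (Node (Node (Node (Leaf (2, 3, 15, 16)) (Leaf (0, 11, 14, 19))) (Node (Leaf (0, 8, 14, 16)) (Leaf (4, 8, 12, 19)))) (Node (Node (Leaf (1, 5, 6, 7)) (Leaf (0, 10, 15, 19))) (Node (Leaf (0, 5, 16, 18)) (Leaf (1, 13, 17, 18)))))) (Node (Node (Node (Node (Leaf (4, 8, 10, 19)) (Leaf (0, 3, 6, 7))) (Node (Leaf (1, 2, 7, 10)) (Leaf (0, 7, 8, 9)))) (Node (Node (Leaf (2, 13, 15, 17)) (Leaf (2, 5, 13, 14))) (Node (Leaf (0, 12, 15, 19)) (Leaf (0, 1, 4, 13))))) (Node (Node (Node (Leaf (0, 6, 7, 14)) (Leaf (3, 6, 12, 13))) (Node (Leaf (0, 13, 15, 18)) (Leaf (5, 6, 11, 16)))) (Node (Node (Leaf (2, 3, 5, 13)) (Leaf (1, 5, 11, 19))) (Node (Leaf (1, 5, 8, 16)) (Leaf (0, 8, 13, 17))))))) (Node (Node (Node (Node (Node (Leaf (14, 15, 18, 20)) (Leaf (5, 17, 18, 20))) (Node (Leaf (1, 6, 7, 16)) (Leaf (2, 4, 6, 11)))) (Node (Node (Leaf (0, 5, 8, 14)) (Leaf (0, 8, 15, 17))) (Node (Leaf (1, 2, 4, 8)) (Leaf (0, 4, 9, 10))))) (Node (Node (Node (Leaf (7, 12, 13, 18))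 (Leaf (0, 3, 14, 18))) (Node (Leaf (0, 2, 9, 12)) (Leaf (1, 8, 10, 12)))) (Node (Node (Leaf (0, 12, 13, 19)) (Leaf (0, 1, 4, 15))) (Node (Leaf (6, 9, 17, 20)) (Leaf (0, 2, 5, 20)))))) (Node (Node (Node (Node (Leaf (2, 5, 11, 12)) (Leaf (0, 2, 9, 10))) (Node (Leaf (1, 2, 3, 20)) (Leaf (1, 11, 16, 19)))) (Node (Node (Leaf (1, 5, 14, 18)) (Leaf (1, 15, 17, 18))) (Node (Leaf (0, 2, 4, 18)) (Leaf (0, 10, 13, 19))))) (Node (Node (Node (Leaf (3, 6, 10, 15)) (Leaf (0, 4, 5, 20))) (Node (Leaf (5, 9, 11, 18)) (Leaf (0, 1, 2, 15)))) (Node (Node (Leaf (0, 4, 9, 12)) (Leaf (1, 3, 5, 18))) (Node (Leaf (8, 9, 11, 14)) (Leaf (7, 10, 12, 19)))))))) (Node (Node (Node (Node (Node (Node (Leaf (1, 4, 12, 20)) (Leaf (0, 13, 14, 19))) (Node (Leaf (1, 5, 10, 18)) (Leaf (2, 12, 14, 17)))) (Node (Node (Leaf (0, 3, 12, 18)) (Leaf (1, 4, 5, 9))) (Node (Leaf (1, 8, 10, 14)) (Leaf (0, 2, 9, 14))))) (Node (Node (Node (Leaf (0, 3, 13, 19)) (Leaf (0, 1, 2, 11))) (Node (Leaf (1, 4, 6, 18)) (Leaf (4, 5, 11, 14)))) (Node (Node (Leaf (0, 2, 6, 8)) (Leaf (0, 12, 14, 18))) (Node (Leaf (0, 2, 3,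 9)) (Leaf (1, 3, 8, 10)))))) (Node (Node (Node (Node (Leaf (7, 16, 17, 18)) (Leaf (0, 4, 9, 14))) (Node (Leaf (0, 1, 6, 17)) (Leaf (1, 2, 5, 9)))) (Node (Node (Leaf (0, 16, 17, 19)) (Leaf (1, 5, 13, 19))) (Node (Leaf (0, 10, 14, 18)) (Leaf (0, 8, 11, 17))))) (Node (Node (Node (Leaf (0, 3, 4, 9)) (Leaf (1, 5, 12, 18))) (Node (Leaf (0, 4, 6, 8)) (Leaf (1, 4, 10, 20)))) (Node (Node (Leaf (1, 2, 6, 18)) (Leaf (1, 8, 12, 14))) (Node (Leaf (0, 2, 7, 16)) (Leaf (0, 1, 4, 11))))))) (Node (Node (Node (Node (Node (Leaf (7, 11, 12, 18)) (Leaf (3, 6, 16, 17))) (Node (Leaf (4, 5, 18, 19)) (Leaf (2, 5, 10, 13)))) (Node (Node (Leaf (0, 11, 12, 19)) (Leaf (4, 11, 14, 16))) (Node (Leaf (0, 4, 5, 7)) (Leaf (0, 8, 12, 16))))) (Node (Node (Node (Leaf (0, 11, 13, 18)) (Leaf (5, 6, 15, 16))) (Node (Leaf (2, 7, 9, 11)) (Leaf (1, 4, 9, 16)))) (Node (Node (Leaf (1, 10, 16, 18)) (Leaf (1, 2, 3, 7))) (Node (Leaf (0, 6, 7, 10)) (Leaf (1, 5, 15, 19)))))) (Node (Node (Node (Node (Leaf (0, 2, 5, 7)) (Leaf (2, 7, 17, 20))) (Node (Leaf (0, 3, 15, 19)) (Leaf (2, 11, 14, 16)))) (Node (Node (Leaf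 (2, 5, 18, 19)) (Leaf (0, 6, 7, 12))) (Node (Leaf (3, 7, 15, 18)) (Leaf (1, 12, 16, 18))))) (Node (Node (Node (Leaf (1, 8, 11, 13)) (Leaf (2, 3, 8, 19))) (Node (Leaf (0, 5, 17, 19)) (Leaf (0, 14, 15, 19)))) (Node (Node (Leaf (0, 8, 10, 16)) (Leaf (1, 2, 9, 16))) (Node (Leaf (5, 7, 17, 18)) (Leaf (0, 7, 18, 20))))))))) (Node (Node (Node (Node (Node (Node (Node (Leaf (7, 8, 9, 12)) (Leaf (0, 7, 15, 18))) (Node (Leaf (3, 6, 7, 12)) (Leaf (0, 6, 13, 14)))) (Node (Node (Leaf (0, 7, 8, 17)) (Leaf (0, 14, 19, 20))) (Node (Leaf (5, 10, 16, 18)) (Leaf (2, 3, 5, 7))))) (Node (Node (Node (Leaf (0, 8, 9, 13)) (Leaf (1, 2, 10, 13))) (Node (Leaf (0, 3, 6, 13)) (Leaf (3, 8, 10, 16)))) (Node (Node (Leaf (0, 1, 4, 7)) (Leaf (0, 2, 11, 16))) (Node (Leaf (0, 2, 8, 19)) (Leaf (1, 9, 10, 19)))))) (Node (Node (Node (Node (Leaf (0, 1, 17, 19)) (Leaf (1, 5, 19, 20))) (Node (Leaf (1, 2, 12, 13)) (Leaf (2, 4, 15, 19)))) (Node (Node (Leaf (1, 7, 17, 18)) (Leaf (4, 9, 13, 15))) (Node (Leaf (0, 6, 16, 17)) (Leaf (1, 5, 6, 13))))) (Node (Node (Node (Leaf (0, 4, 8, 19)) (Leaf (3, 6, 7, 10)))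 (Node (Leaf (0, 1, 2, 7)) (Leaf (0, 4, 11, 16)))) (Node (Node (Leaf (4, 7, 8, 18)) (Leaf (5, 12, 16, 18))) (Node (Leaf (1, 2, 18, 19)) (Leaf (1, 4, 10, 13))))))) (Node (Node (Node (Node (Node (Leaf (2, 7, 14, 16)) (Leaf (1, 4, 11, 14))) (Node (Leaf (1, 9, 15, 18)) (Leaf (0, 1, 8, 12)))) (Node (Node (Leaf (4, 6, 8, 14)) (Leaf (1, 3, 6, 17))) (Node (Leaf (0, 2, 10, 17)) (Leaf (1, 8, 9, 17))))) (Node (Node (Node (Leaf (1, 2, 12, 15)) (Leaf (2, 3, 7, 16))) (Node (Leaf (4, 5, 12, 20)) (Leaf (0, 4, 12, 17)))) (Node (Node (Leaf (0, 7, 10, 19)) (Leaf (1, 5, 6, 15))) (Node (Leaf (6, 7, 11, 13)) (Leaf (2, 4, 6, 20)))))) (Node (Node (Node (Node (Leaf (0, 3, 6, 15)) (Leaf (4, 5, 10, 20))) (Node (Leaf (0, 8, 9, 15)) (Leaf (1, 2, 10, 15)))) (Node (Node (Leaf (4, 9, 10, 12)) (Leaf (0, 4, 5, 11))) (Node (Leaf (2, 5, 6, 18)) (Leaf (0, 7, 12, 19))))) (Node (Node (Node (Leaf (0, 1, 8, 10)) (Leaf (0, 6, 14, 15))) (Node (Leaf (3, 12, 14, 18)) (Leaf (0, 7, 13, 18)))) (Node (Node (Leaf (1, 8, 11, 20)) (Leaf (0, 2, 12, 17))) (Node (Leaf (1, 2, 3, 11)) (Leaf (1, 16, 19, 20))))))))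 (Node (Node (Node (Node (Node (Node (Leaf (0, 8, 9, 11)) (Leaf (1, 2, 10, 11))) (Node (Leaf (0, 3, 6, 11)) (Leaf (0, 9, 16, 19)))) (Node (Node (Leaf (1, 2, 5, 17)) (Leaf (0, 1, 2, 20))) (Node (Leaf (0, 4, 14, 17)) (Leaf (0, 1, 3, 8))))) (Node (Node (Node (Leaf (2, 4, 14, 18)) (Leaf (4, 6, 8, 12))) (Node (Leaf (0, 1, 5, 18)) (Leaf (0, 6, 11, 14)))) (Node (Node (Leaf (1, 2, 3, 15)) (Leaf (2, 7, 12, 16))) (Node (Leaf (0, 1, 8, 14)) (Leaf (0, 3, 4, 17)))))) (Node (Node (Node (Node (Leaf (0, 2, 14, 17)) (Leaf (0, 2, 5, 15))) (Node (Leaf (1, 4, 5, 17)) (Leaf (0, 1, 4, 20)))) (Node (Node (Leaf (0, 6, 12, 15)) (Leaf (2, 8, 18, 20))) (Node (Leaf (2, 7, 10, 16)) (Leaf (1, 4, 10, 11))))) (Node (Node (Node (Leaf (2, 3, 5, 20)) (Leaf (0, 2, 3, 17))) (Node (Leaf (0, 7, 14, 19)) (Leaf (0, 8, 17, 20)))) (Node (Node (Leaf (6, 7, 13, 15)) (Leaf (2, 3, 9, 12))) (Node (Leaf (0, 15, 18, 20)) (Leaf (1, 5, 6, 11))))))) (Node (Node (Node (Node (Node (Leaf (1, 3, 4, 13)) (Leaf (2, 4, 11, 19))) (Node (Leaf (0, 6, 18, 19)) (Leaf (1, 7, 8, 11)))) (Node (Node (Leaf (0, 1, 16, 18)) (Leaf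 (5, 13, 17, 18))) (Node (Leaf (2, 7, 9, 20)) (Leaf (4, 9, 11, 13))))) (Node (Node (Node (Leaf (0, 12, 19, 20)) (Leaf (0, 4, 15, 16))) (Node (Leaf (1, 2, 16, 17)) (Leaf (0, 2, 5, 13)))) (Node (Node (Leaf (2, 6, 17, 19)) (Leaf (0, 5, 9, 19))) (Node (Leaf (0, 6, 12, 13)) (Leaf (3, 6, 7, 14)))))) (Node (Node (Node (Node (Leaf (1, 3, 9, 19)) (Leaf (1, 6, 11, 16))) (Node (Leaf (1, 6, 8, 19)) (Leaf (0, 7, 11, 18)))) (Node (Node (Leaf (1, 8, 13, 20)) (Leaf (0, 6, 10, 13))) (Node (Leaf (1, 2, 3, 13)) (Leaf (7, 10, 18, 20))))) (Node (Node (Node (Leaf (2, 5, 7, 10)) (Leaf (1, 9, 14, 19))) (Node (Leaf (3, 10, 15, 19)) (Leaf (11, 12, 13, 18)))) (Node (Node (Leaf (1, 4, 16, 17)) (Leaf (0, 4, 5, 13))) (Node (Leaf (3, 11, 14, 19)) (Leaf (0, 2, 15, 16)))))))))) (Node (Node (Node (Node (Node (Node (Node (Node (Leaf (4, 15, 18, 19)) (Leaf (1, 12, 13, 18))) (Node (Leaf (3, 6, 14, 16)) (Leaf (4, 5, 10, 16)))) (Node (Node (Leaf (0, 4, 7, 15)) (Leaf (2, 11, 13, 14))) (Node (Leaf (4, 11, 16, 17)) (Leaf (1, 2, 7, 17))))) (Node (Node (Node (Leaf (6, 8, 11, 19)) (Leaf (0, 1, 7, 18))) (Node (Leaf (0,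 8, 10, 13)) (Leaf (1, 2, 9, 13)))) (Node (Node (Leaf (2, 3, 11, 13)) (Leaf (3, 4, 7, 20))) (Node (Leaf (1, 8, 11, 16)) (Leaf (2, 4, 7, 8)))))) (Node (Node (Node (Node (Leaf (0, 3, 5, 19)) (Leaf (0, 8, 12, 13))) (Node (Leaf (0, 2, 7, 15)) (Leaf (2, 8, 17, 19)))) (Node (Node (Leaf (3, 5, 7, 18)) (Leaf (2, 5, 10, 16))) (Node (Leaf (1, 10, 12, 19)) (Leaf (3, 6, 13, 17))))) (Node (Node (Node (Leaf (0, 15, 17, 19)) (Leaf (0, 5, 14, 19))) (Node (Leaf (1, 10, 13, 18)) (Leaf (1, 2, 4, 19)))) (Node (Node (Leaf (1, 6, 7, 11)) (Leaf (0, 8, 18, 19))) (Node (Leaf (0, 11, 16, 18)) (Leaf (5, 6, 13, 15))))))) (Node (Node (Node (Node (Node (Leaf (1, 5, 8, 11)) (Leaf (6, 8, 14, 18))) (Node (Leaf (0, 13, 17, 19)) (Leaf (1, 5, 16, 19)))) (Node (Node (Leaf (0, 2, 9, 17)) (Leaf (1, 8, 10, 17))) (Node (Leaf (7, 13, 17, 18)) (Leaf (1, 4, 9, 15))))) (Node (Node (Node (Leaf (0, 2, 7, 13)) (Leaf (0, 4, 11, 20))) (Node (Leaf (2, 6, 18, 20)) (Leaf (0, 8, 12, 15)))) (Node (Node (Leaf (2, 13, 18, 19)) (Leaf (1, 3, 11, 18))) (Node (Leaf (0, 7, 9, 19)) (Leaf (5, 12, 18, 20)))))) (Node (Node (Node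 (Node (Leaf (0, 5, 11, 18)) (Leaf (0, 1, 6, 14))) (Node (Leaf (0, 4, 9, 17)) (Leaf (2, 4, 5, 6)))) (Node (Node (Leaf (0, 8, 11, 14)) (Leaf (0, 10, 17, 18))) (Node (Leaf (2, 3, 11, 15)) (Leaf (0, 14, 16, 19))))) (Node (Node (Node (Leaf (0, 1, 3, 6)) (Leaf (3, 8, 10, 20))) (Node (Leaf (0, 1, 8, 9)) (Leaf (1, 12, 15, 18)))) (Node (Node (Leaf (2, 4, 9, 18)) (Leaf (0, 3, 8, 11))) (Node (Leaf (0, 3, 16, 19)) (Leaf (0, 2, 11, 20)))))))) (Node (Node (Node (Node (Node (Node (Leaf (4, 10, 12, 14)) (Leaf (0, 10, 16, 19))) (Node (Leaf (0, 5, 15, 18)) (Leaf (0, 14, 17, 18)))) (Node (Node (Leaf (3, 6, 9, 20)) (Leaf (1, 11, 13, 19))) (Node (Leaf (0, 8, 14, 15)) (Leaf (0, 1, 6, 10))))) (Node (Node (Node (Leaf (5, 6, 12, 14)) (Leaf (1, 11, 12, 18))) (Node (Leaf (0, 3, 17, 18)) (Leaf (3, 5, 18, 20)))) (Node (Node (Leaf (2, 5, 15, 17)) (Leaf (0, 2, 15, 20))) (Node (Leaf (1, 4, 17, 20)) (Leaf (0, 1, 4, 5)))))) (Node (Node (Node (Node (Leaf (2, 4, 8, 20)) (Leaf (7, 8, 11, 13))) (Node (Leaf (1, 5, 8, 15)) (Leaf (1, 8, 14, 17)))) (Node (Node (Leaf (1, 6, 7, 13)) (Leaf (1, 4, 9,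 11))) (Node (Leaf (0, 1, 18, 20)) (Leaf (1, 5, 17, 18))))) (Node (Node (Node (Leaf (1, 2, 17, 20)) (Leaf (0, 1, 2, 5))) (Node (Leaf (0, 12, 16, 19)) (Leaf (0, 4, 15, 20)))) (Node (Node (Leaf (0, 1, 6, 12)) (Leaf (8, 9, 11, 17))) (Node (Leaf (7, 12, 16, 18)) (Leaf (1, 3, 15, 18))))))) (Node (Node (Node (Node (Node (Leaf (0, 2, 7, 11)) (Leaf (0, 1, 4, 16))) (Node (Leaf (2, 15, 16, 17)) (Leaf (2, 5, 14, 16)))) (Node (Node (Leaf (2, 7, 10, 20)) (Leaf (1, 3, 13, 18))) (Node (Leaf (3, 7, 8, 10)) (Leaf (0, 4, 6, 19))))) (Node (Node (Node (Leaf (1, 5, 8, 13)) (Leaf (0, 8, 16, 17))) (Node (Leaf (0, 11, 17, 19)) (Leaf (5, 7, 10, 18)))) (Node (Node (Leaf (0, 15, 16, 18)) (Leaf (5, 6, 11, 13))) (Node (Leaf (1, 6, 7, 15)) (Leaf (0, 5, 10, 19)))))) (Node (Node (Node (Node (Leaf (5, 7, 12, 18)) (Leaf (0, 2, 6, 19))) (Node (Leaf (1, 3, 10, 19)) (Leaf (2, 10, 11, 13)))) (Node (Node (Leaf (0, 5, 12, 19)) (Leaf (0, 3, 8, 13))) (Node (Leaf (0, 4, 7, 11)) (Leaf (0, 1, 2, 16))))) (Node (Node (Node (Leaf (0, 5, 13, 18)) (Leaf (1, 16, 17, 18))) (Node (Leaf (2, 5, 7, 9)) (Leaf (0, 6,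 7, 17)))) (Node (Node (Leaf (0, 8, 13, 14)) (Leaf (3, 7, 8, 12))) (Node (Leaf (2, 3, 13, 15)) (Leaf (1, 11, 15, 19))))))))) (Node (Node (Node (Node (Node (Node (Node (Leaf (1, 2, 3, 16)) (Leaf (1, 7, 10, 18))) (Node (Leaf (1, 8, 16, 20)) (Leaf (0, 6, 10, 16)))) (Node (Node (Leaf (2, 8, 9, 19)) (Leaf (0, 1, 10, 19))) (Node (Leaf (1, 4, 7, 9)) (Leaf (1, 6, 11, 13))))) (Node (Node (Node (Leaf (4, 7, 11, 14)) (Leaf (0, 2, 13, 15))) (Node (Leaf (0, 7, 8, 12)) (Leaf (0, 4, 5, 16)))) (Node (Node (Leaf (3, 6, 7, 17)) (Leaf (11, 12, 16, 18))) (Node (Leaf (7, 8, 9, 17)) (Leaf (0, 9, 15, 19)))))) (Node (Node (Node (Node (Leaf (1, 2, 7, 9)) (Leaf (0, 7, 8, 10))) (Node (Leaf (0, 1, 13, 18)) (Leaf (5, 16, 17, 18)))) (Node (Node (Leaf (2, 4, 8, 13)) (Leaf (5, 11, 15, 19))) (Node (Leaf (1, 3, 4, 16)) (Leaf (2, 3, 7, 11))))) (Node (Node (Node (Leaf (0, 6, 12, 16)) (Leaf (4, 6, 14, 19))) (Node (Leaf (1, 7, 12, 18)) (Leaf (3, 15, 16, 18)))) (Node (Node (Leaf (1, 2, 13, 17)) (Leaf (0, 2, 5, 16))) (Node (Leaf (0, 1, 12, 19)) (Leaf (0, 4, 13, 15))))))) (Node (Node (Node (Node (Node (Leaf (2,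 7, 10, 13)) (Leaf (1, 3, 18, 20))) (Node (Leaf (0, 9, 10, 18)) (Leaf (1, 2, 8, 18)))) (Node (Node (Leaf (4, 5, 17, 20)) (Leaf (4, 14, 15, 20))) (Node (Leaf (1, 2, 15, 17)) (Leaf (1, 2, 5, 14))))) (Node (Node (Node (Leaf (0, 1, 15, 18)) (Leaf (1, 8, 9, 12))) (Node (Leaf (6, 7, 15, 16)) (Leaf (1, 3, 6, 12)))) (Node (Node (Leaf (0, 3, 4, 14)) (Leaf (0, 1, 8, 17))) (Node (Leaf (1, 2, 3, 5)) (Leaf (5, 11, 13, 19)))))) (Node (Node (Node (Node (Leaf (1, 3, 6, 10)) (Leaf (0, 3, 8, 20))) (Node (Leaf (1, 8, 9, 10)) (Leaf (0, 6, 9, 20)))) (Node (Node (Leaf (3, 14, 17, 18)) (Leaf (0, 9, 13, 19))) (Node (Leaf (0, 5, 6, 12)) (Leaf (2, 7, 18, 19))))) (Node (Node (Node (Leaf (0, 8, 14, 20)) (Leaf (0, 7, 17, 19))) (Node (Leaf (0, 2, 3, 14)) (Leaf (2, 7, 12, 13)))) (Node (Node (Leaf (0, 5, 18, 20)) (Leaf (1, 6, 11, 15))) (Node (Leaf (0, 4, 10, 12)) (Leaf (4, 5, 9, 11)))))))) (Node (Node (Node (Node (Node (Node (Leaf (1, 5, 9, 18)) (Leaf (0, 2, 11, 15))) (Node (Leaf (1, 4, 11, 17)) (Leaf (2, 7, 16, 17)))) (Node (Node (Leaf (1, 8, 9, 14)) (Leaf (0, 2, 10, 14))) (Node (Leaf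 (1, 3, 6, 14)) (Leaf (1, 4, 5, 10))))) (Node (Node (Node (Leaf (0, 4, 12, 14)) (Leaf (1, 13, 19, 20))) (Node (Leaf (1, 2, 5, 12)) (Leaf (10, 14, 17, 18)))) (Node (Node (Leaf (0, 2, 3, 10)) (Leaf (0, 7, 16, 18))) (Node (Leaf (0, 8, 10, 20)) (Leaf (1, 2, 9, 20)))))) (Node (Node (Node (Node (Leaf (0, 5, 8, 9)) (Leaf (1, 2, 5, 10))) (Node (Leaf (0, 3, 5, 6)) (Leaf (0, 4, 10, 14)))) (Node (Node (Leaf (0, 9, 14, 18)) (Leaf (0, 8, 12, 20))) (Node (Leaf (2, 7, 13, 14)) (Leaf (0, 2, 3, 12))))) (Node (Node (Node (Leaf (6, 7, 11, 16)) (Leaf (1, 2, 4, 6))) (Node (Leaf (0, 1, 11, 18)) (Leaf (0, 5, 6, 14)))) (Node (Node (Leaf (1, 4, 5, 12)) (Leaf (0, 3, 9, 18))) (Node (Leaf (0, 2, 12, 14)) (Leaf (0, 6, 8, 18))))))) (Node (Node (Node (Node (Node (Leaf (0, 6, 13, 17)) (Leaf (1, 5, 6, 16))) (Node (Leaf (2, 6, 12, 19)) (Leaf (0, 5, 7, 18)))) (Node (Node (Leaf (1, 2, 12, 16)) (Leaf (2, 3, 7, 15))) (Node (Leaf (0, 17, 19, 20)) (Leaf (0, 7, 8, 14))))) (Node (Node (Node (Leaf (2, 7, 10, 11)) (Leaf (1, 4, 10, 16))) (Node (Leaf (3, 8, 18, 19)) (Leaf (5, 12, 13, 18)))) (Node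 (Node (Leaf (0, 2, 7, 20)) (Leaf (0, 4, 11, 13))) (Node (Leaf (0, 3, 7, 8)) (Leaf (3, 15, 17, 19)))))) (Node (Node (Node (Node (Leaf (5, 10, 13, 18)) (Leaf (2, 4, 5, 19))) (Node (Leaf (1, 4, 12, 16)) (Leaf (0, 1, 14, 19)))) (Node (Node (Leaf (4, 6, 12, 19)) (Leaf (0, 6, 14, 16))) (Node (Leaf (5, 6, 7, 11)) (Leaf (1, 7, 14, 18))))) (Node (Node (Node (Leaf (4, 6, 13, 18)) (Leaf (2, 6, 10, 19))) (Node (Leaf (0, 1, 3, 19)) (Leaf (0, 2, 11, 13)))) (Node (Node (Leaf (0, 3, 6, 16)) (Leaf (0, 9, 11, 19))) (Node (Leaf (0, 8, 9, 16)) (Leaf (1, 2, 10, 16)))))))))))) (Node (Node (Node (Node (Node (Node (Node (Node (Node (Node (Leaf (1, 7, 10, 20)) (Leaf (0, 6, 7, 8))) (Node (Leaf (9, 12, 13, 14)) (Leaf (0, 3, 7, 9)))) (Node (Node (Leaf (0, 1, 7, 11)) (Leaf (0, 2, 4, 16))) (Node (Leaf (0, 13, 14, 17)) (Leaf (0, 5, 13, 15))))) (Node (Node (Node (Leaf (0, 10, 12, 16)) (Leaf (4, 10, 14, 19))) (Node (Leaf (0, 7, 9, 14)) (Leaf (3, 9, 12, 13)))) (Node (Node (Leaf (1, 11, 12, 13)) (Leaf (2, 3, 12, 19))) (Node (Leaf (1, 3, 5, 16)) (Leaf (0, 3, 13, 17)))))) (Node (Node (Node (Node (Leaf (0, 8,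 11, 19)) (Leaf (1, 6, 7, 18))) (Node (Leaf (1, 5, 13, 17)) (Leaf (0, 1, 13, 20)))) (Node (Node (Leaf (5, 7, 10, 15)) (Leaf (0, 1, 6, 19))) (Node (Leaf (2, 3, 10, 19)) (Leaf (1, 10, 11, 13))))) (Node (Node (Node (Leaf (2, 8, 15, 16)) (Leaf (3, 5, 7, 11))) (Node (Leaf (0, 3, 14, 16)) (Leaf (1, 7, 12, 20)))) (Node (Node (Leaf (3, 7, 10, 17)) (Leaf (2, 16, 17, 18))) (Node (Leaf (1, 5, 7, 9)) (Leaf (2, 10, 14, 19))))))) (Node (Node (Node (Node (Node (Leaf (3, 13, 16, 20)) (Leaf (2, 11, 13, 19))) (Node (Leaf (1, 2, 8, 20)) (Leaf (0, 2, 6, 10)))) (Node (Node (Leaf (0, 4, 18, 20)) (Leaf (3, 6, 8, 11))) (Node (Leaf (0, 5, 10, 12)) (Leaf (2, 6, 11, 20))))) (Node (Node (Node (Leaf (1, 5, 15, 17)) (Leaf (0, 1, 15, 20))) (Node (Leaf (2, 4, 17, 20)) (Leaf (0, 2, 4, 5)))) (Node (Node (Leaf (6, 8, 11, 14)) (Leaf (1, 5, 8, 18))) (Node (Leaf (0, 4, 6, 12)) (Leaf (6, 14, 16, 19)))))) (Node (Node (Node (Node (Leaf (0, 3, 8, 18)) (Leaf (2, 4, 9, 11))) (Node (Leaf (0, 2, 18, 20)) (Leaf (2, 5, 17, 18)))) (Node (Node (Leaf (0, 3, 5, 14)) (Leaf (0, 3, 15, 17))) (Node (Leaf (1, 2,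 3, 4)) (Leaf (2, 8, 14, 17))))) (Node (Node (Node (Leaf (0, 2, 6, 12)) (Leaf (0, 8, 14, 18))) (Node (Leaf (6, 13, 17, 19)) (Leaf (1, 3, 10, 12)))) (Node (Node (Leaf (0, 14, 15, 17)) (Leaf (5, 14, 15, 20))) (Node (Leaf (2, 3, 8, 17)) (Leaf (1, 2, 4, 14)))))))) (Node (Node (Node (Node (Node (Node (Leaf (0, 1, 9, 17)) (Leaf (1, 2, 5, 6))) (Node (Leaf (0, 3, 5, 10)) (Leaf (0, 4, 6, 14)))) (Node (Node (Leaf (2, 5, 8, 11)) (Leaf (3, 7, 15, 16))) (Node (Leaf (3, 5, 11, 20)) (Leaf (0, 3, 11, 17))))) (Node (Node (Node (Leaf (0, 4, 8, 9)) (Leaf (1, 2, 4, 10))) (Node (Leaf (0, 3, 4, 6)) (Leaf (0, 5, 10, 14)))) (Node (Node (Leaf (0, 1, 7, 13)) (Leaf (1, 3, 12, 14))) (Node (Leaf (0, 11, 14, 17)) (Leaf (0, 5, 11, 15)))))) (Node (Node (Node (Node (Leaf (0, 5, 12, 14)) (Leaf (0, 12, 15, 17))) (Node (Leaf (1, 2, 4, 12)) (Leaf (2, 13, 15, 19)))) (Node (Node (Leaf (0, 8, 12, 18)) (Leaf (0, 2, 6, 14))) (Node (Leaf (1, 3, 10, 14)) (Leaf (1, 4, 5, 6))))) (Node (Node (Node (Leaf (0, 8, 13, 19)) (Leaf (0, 3, 5, 12))) (Node (Leaf (1, 5, 11, 17)) (Leaf (0, 1, 11, 20)))) (Node (Node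 (Leaf (0, 2, 3, 6)) (Leaf (3, 5, 9, 17))) (Node (Leaf (0, 2, 8, 9)) (Leaf (2, 12, 15, 18))))))) (Node (Node (Node (Node (Node (Leaf (2, 3, 14, 19)) (Leaf (0, 11, 15, 16))) (Node (Leaf (0, 5, 7, 20)) (Leaf (9, 12, 18, 19)))) (Node (Node (Leaf (4, 10, 12, 19)) (Leaf (0, 10, 14, 16))) (Node (Leaf (3, 9, 13, 14)) (Leaf (0, 7, 9, 12))))) (Node (Node (Node (Leaf (1, 3, 11, 13)) (Leaf (6, 9, 19, 20))) (Node (Leaf (1, 5, 12, 16)) (Leaf (0, 12, 13, 17)))) (Node (Node (Leaf (0, 3, 10, 16)) (Leaf (0, 2, 7, 18))) (Node (Leaf (4, 6, 7, 11)) (Leaf (1, 2, 6, 16)))))) (Node (Node (Node (Node (Leaf (0, 10, 13, 17)) (Leaf (1, 5, 10, 16))) (Node (Leaf (1, 15, 18, 19)) (Leaf (3, 9, 16, 17)))) (Node (Node (Leaf (1, 11, 16, 17)) (Leaf (0, 5, 11, 13))) (Node (Leaf (0, 1, 7, 15)) (Leaf (0, 3, 12, 16))))) (Node (Node (Node (Leaf (2, 6, 7, 11)) (Leaf (1, 4, 6, 16))) (Node (Leaf (9, 14, 16, 17)) (Leaf (0, 4, 7, 18)))) (Node (Node (Leaf (0, 7, 9, 10)) (Leaf (1, 2, 7, 8))) (Node (Leaf (0, 12, 14, 16)) (Leaf (1, 3, 7, 20))))))))) (Node (Node (Node (Node (Node (Node (Node (Leaf (1, 12, 13, 20)) (Leaf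 (0, 4, 14, 19))) (Node (Leaf (3, 5, 11, 13)) (Leaf (1, 2, 5, 19)))) (Node (Node (Leaf (0, 9, 16, 17)) (Leaf (1, 5, 9, 13))) (Node (Leaf (1, 6, 12, 19)) (Leaf (3, 10, 13, 17))))) (Node (Node (Node (Leaf (0, 1, 7, 20)) (Leaf (1, 5, 7, 17))) (Node (Leaf (1, 6, 13, 18)) (Leaf (3, 7, 9, 10)))) (Node (Node (Leaf (1, 7, 10, 11)) (Leaf (2, 4, 10, 16))) (Node (Leaf (10, 13, 14, 17)) (Leaf (5, 10, 13, 15)))))) (Node (Node (Node (Node (Leaf (3, 7, 9, 12)) (Leaf (0, 9, 13, 14))) (Node (Leaf (3, 10, 14, 16)) (Leaf (2, 7, 14, 18)))) (Node (Node (Leaf (0, 3, 7, 17)) (Leaf (1, 4, 5, 19))) (Node (Leaf (2, 4, 12, 16)) (Leaf (0, 2, 14, 19))))) (Node (Node (Node (Leaf (0, 3, 9, 13)) (Leaf (7, 9, 12, 14))) (Node (Leaf (0, 6, 8, 13)) (Leaf (1, 10, 13, 20)))) (Node (Node (Leaf (0, 5, 7, 15)) (Leaf (0, 7, 14, 17))) (Node (Leaf (0, 2, 3, 19)) (Leaf (0, 1, 11, 13))))))) (Node (Node (Node (Node (Node (Leaf (0, 6, 8, 15)) (Leaf (0, 1, 10, 14))) (Node (Leaf (0, 3, 9, 15)) (Leaf (2, 4, 5, 10)))) (Node (Node (Leaf (2, 5, 9, 18)) (Leaf (0, 1, 11, 15))) (Node (Leaf (0, 5, 7, 13)) (Leaf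 (1, 7, 16, 17))))) (Node (Node (Node (Leaf (0, 1, 3, 10)) (Leaf (2, 3, 8, 9))) (Node (Leaf (0, 5, 9, 17)) (Leaf (0, 9, 14, 15)))) (Node (Node (Leaf (1, 3, 11, 20)) (Leaf (1, 2, 16, 19))) (Node (Leaf (1, 2, 8, 11)) (Leaf (0, 9, 10, 11)))))) (Node (Node (Node (Node (Leaf (1, 6, 15, 18)) (Leaf (0, 5, 11, 20))) (Node (Leaf (0, 7, 15, 16)) (Leaf (0, 1, 3, 12)))) (Node (Node (Leaf (0, 9, 11, 12)) (Leaf (1, 6, 8, 17))) (Node (Leaf (4, 8, 9, 14)) (Leaf (1, 3, 9, 17))))) (Node (Node (Node (Leaf (1, 4, 8, 11)) (Leaf (2, 7, 8, 16))) (Node (Leaf (0, 1, 12, 14)) (Leaf (1, 3, 7, 13)))) (Node (Node (Leaf (3, 5, 10, 14)) (Leaf (2, 4, 9, 20))) (Node (Leaf (0, 2, 11, 18)) (Leaf (1, 5, 9, 15)))))))) (Node (Node (Node (Node (Node (Node (Leaf (0, 7, 11, 16)) (Leaf (0, 1, 2, 4))) (Node (Leaf (0, 14, 17, 20)) (Leaf (0, 5, 15, 20)))) (Node (Node (Leaf (1, 7, 10, 13)) (Leaf (2, 3, 18, 20))) (Node (Leaf (0, 9, 12, 15)) (Leaf (5, 10, 11, 15))))) (Node (Node (Node (Leaf (1, 9, 10, 17)) (Leaf (0, 2, 8, 17))) (Node (Leaf (1, 4, 8, 15)) (Leaf (0, 3, 17, 20)))) (Node (Node (Leaf (0, 1,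 10, 12)) (Leaf (1, 5, 9, 11))) (Node (Leaf (3, 8, 14, 18)) (Leaf (1, 4, 17, 18)))))) (Node (Node (Node (Node (Leaf (0, 3, 9, 11)) (Leaf (0, 6, 16, 19))) (Node (Leaf (0, 6, 8, 11)) (Leaf (1, 7, 18, 19)))) (Node (Node (Leaf (2, 3, 6, 10)) (Leaf (2, 4, 5, 14))) (Node (Leaf (1, 5, 17, 20)) (Leaf (0, 13, 16, 20))))) (Node (Node (Node (Leaf (5, 10, 12, 14)) (Leaf (0, 9, 11, 14))) (Node (Leaf (0, 4, 15, 18)) (Leaf (4, 8, 9, 12)))) (Node (Node (Leaf (1, 2, 8, 15)) (Leaf (0, 9, 10, 15))) (Node (Leaf (0, 1, 3, 14)) (Leaf (0, 4, 8, 17))))))) (Node (Node (Node (Node (Node (Leaf (0, 4, 13, 18)) (Leaf (0, 2, 10, 19))) (Node (Leaf (1, 3, 6, 19)) (Leaf (1, 9, 11, 16)))) (Node (Node (Leaf (1, 3, 13, 20)) (Leaf (1, 7, 12, 15))) (Node (Leaf (1, 2, 8, 13)) (Leaf (0, 9, 10, 13))))) (Node (Node (Node (Leaf (4, 7, 12, 18)) (Leaf (5, 8, 16, 18))) (Node (Leaf (5, 7, 10, 20)) (Leaf (0, 7, 10, 17)))) (Node (Node (Leaf (0, 4, 12, 19)) (Leaf (0, 1, 13, 15))) (Node (Leaf (0, 5, 7, 11)) (Leaf (7, 9, 10, 12)))))) (Node (Node (Node (Node (Leaf (0, 7, 12, 17)) (Leaf (3, 13, 14, 17))) (Node (Leaf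 (2, 3, 4, 16)) (Leaf (1, 3, 7, 11)))) (Node (Node (Leaf (2, 6, 7, 20)) (Leaf (4, 6, 11, 13))) (Node (Leaf (0, 2, 13, 18)) (Leaf (0, 4, 10, 19))))) (Node (Node (Node (Leaf (1, 16, 17, 20)) (Leaf (0, 1, 5, 16))) (Node (Leaf (0, 2, 12, 19)) (Leaf (2, 4, 14, 16)))) (Node (Node (Leaf (0, 9, 12, 13)) (Leaf (3, 7, 9, 14))) (Node (Leaf (1, 7, 10, 15)) (Leaf (0, 5, 6, 19)))))))))) (Node (Node (Node (Node (Node (Node (Node (Node (Leaf (0, 5, 8, 19)) (Leaf (0, 3, 12, 13))) (Node (Leaf (1, 11, 13, 17)) (Leaf (0, 5, 11, 16)))) (Node (Node (Leaf (0, 14, 18, 19)) (Leaf (3, 9, 13, 17))) (Node (Leaf (0, 10, 16, 17)) (Leaf (1, 5, 10, 13))))) (Node (Node (Node (Leaf (0, 12, 13, 14)) (Leaf (1, 4, 19, 20))) (Node (Leaf (2, 14, 17, 19)) (Leaf (2, 5, 15, 19)))) (Node (Node (Leaf (9, 13, 14, 17)) (Leaf (0, 3, 18, 19))) (Node (Leaf (1, 7, 9, 11)) (Leaf (1, 4, 6, 13)))))) (Node (Node (Node (Node (Leaf (1, 5, 18, 19)) (Leaf (6, 11, 14, 19))) (Node (Leaf (3, 7, 10, 12)) (Leaf (0, 10, 13, 14)))) (Node (Node (Leaf (0, 1, 5, 7)) (Leaf (1, 7, 17, 20))) (Node (Leaf (2, 4, 7, 14)) (Leaf (0, 11, 13,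 15))))) (Node (Node (Node (Leaf (3, 6, 11, 19)) (Leaf (1, 2, 6, 13))) (Node (Leaf (0, 3, 10, 13)) (Leaf (3, 6, 8, 16)))) (Node (Node (Leaf (1, 5, 12, 13)) (Leaf (0, 12, 16, 17))) (Node (Leaf (1, 3, 11, 16)) (Leaf (1, 2, 19, 20))))))) (Node (Node (Node (Node (Node (Leaf (0, 3, 10, 15)) (Leaf (2, 4, 5, 9))) (Node (Leaf (2, 8, 10, 14)) (Leaf (0, 1, 9, 14)))) (Node (Node (Leaf (0, 3, 11, 14)) (Leaf (2, 15, 16, 19))) (Node (Leaf (1, 5, 12, 15)) (Leaf (1, 12, 14, 17))))) (Node (Node (Node (Leaf (0, 1, 6, 8)) (Leaf (0, 10, 14, 15))) (Node (Leaf (0, 1, 3, 9)) (Leaf (2, 3, 8, 10)))) (Node (Node (Leaf (5, 9, 10, 12)) (Leaf (11, 14, 15, 20))) (Node (Leaf (0, 8, 16, 19)) (Leaf (4, 8, 12, 14)))))) (Node (Node (Node (Node (Leaf (1, 3, 5, 11)) (Leaf (2, 5, 13, 19))) (Node (Leaf (0, 12, 14, 15)) (Leaf (0, 5, 12, 17)))) (Node (Node (Leaf (4, 8, 10, 14)) (Leaf (1, 3, 10, 17))) (Node (Leaf (0, 2, 6, 17)) (Leaf (2, 5, 6, 20))))) (Node (Node (Node (Leaf (1, 11, 15, 17)) (Leaf (1, 5, 11, 14))) (Node (Leaf (0, 1, 7, 16)) (Leaf (0, 2, 4, 11)))) (Node (Node (Leaf (0, 6, 7, 19)) (Leaf (1,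 5, 10, 15))) (Node (Leaf (1, 16, 18, 19)) (Leaf (2, 4, 10, 20)))))))) (Node (Node (Node (Node (Node (Node (Leaf (0, 11, 12, 14)) (Leaf (3, 7, 11, 13))) (Node (Leaf (1, 3, 5, 15)) (Leaf (1, 3, 14, 17)))) (Node (Node (Leaf (0, 1, 2, 18)) (Leaf (5, 9, 11, 15))) (Node (Leaf (1, 7, 9, 13)) (Leaf (1, 4, 6, 11))))) (Node (Node (Node (Leaf (3, 5, 9, 10)) (Leaf (0, 2, 4, 15))) (Node (Leaf (5, 6, 8, 10)) (Leaf (0, 1, 5, 20)))) (Node (Node (Leaf (6, 16, 17, 19)) (Leaf (3, 9, 11, 17))) (Node (Leaf (0, 1, 9, 12)) (Leaf (1, 5, 10, 11)))))) (Node (Node (Node (Node (Leaf (2, 5, 14, 18)) (Leaf (1, 2, 6, 11))) (Node (Leaf (0, 1, 4, 18)) (Leaf (3, 5, 9, 12)))) (Node (Node (Leaf (1, 5, 11, 12)) (Leaf (0, 1, 9, 10))) (Node (Leaf (0, 3, 14, 15)) (Leaf (0, 3, 5, 17))))) (Node (Node (Node (Leaf (5, 7, 10, 16)) (Leaf (2, 3, 5, 18))) (Node (Leaf (0, 8, 17, 18)) (Leaf (0, 10, 11, 14)))) (Node (Node (Leaf (1, 2, 4, 17)) (Leaf (2, 3, 8, 14))) (Node (Leaf (0, 5, 14, 17)) (Leaf (1, 13, 14, 16))))))) (Node (Node (Node (Node (Node (Leaf (2, 4, 7, 10)) (Leaf (1, 10, 11, 16))) (Node (Leaf (1, 8, 10,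 19)) (Leaf (0, 2, 9, 19)))) (Node (Node (Leaf (1, 5, 16, 17)) (Leaf (0, 1, 16, 20))) (Node (Leaf (3, 9, 10, 16)) (Leaf (2, 7, 9, 18))))) (Node (Node (Node (Leaf (2, 5, 6, 7)) (Leaf (0, 7, 9, 17))) (Node (Leaf (3, 6, 15, 19)) (Leaf (2, 13, 17, 18)))) (Node (Node (Leaf (0, 3, 13, 14)) (Leaf (9, 17, 18, 19))) (Node (Leaf (2, 8, 13, 15)) (Leaf (4, 5, 11, 19)))))) (Node (Node (Node (Node (Leaf (0, 14, 16, 17)) (Leaf (0, 5, 15, 16))) (Node (Leaf (0, 7, 11, 20)) (Leaf (0, 2, 4, 13)))) (Node (Node (Leaf (9, 12, 14, 16)) (Leaf (0, 4, 9, 19))) (Node (Leaf (11, 18, 19, 20)) (Leaf (2, 3, 16, 18))))) (Node (Node (Node (Leaf (1, 3, 5, 13)) (Leaf (0, 3, 16, 17))) (Node (Leaf (1, 11, 12, 16)) (Leaf (2, 4, 7, 12)))) (Node (Node (Leaf (1, 7, 9, 15)) (Leaf (3, 9, 12, 16))) (Node (Leaf (0, 10, 12, 13)) (Leaf (3, 7, 10, 14))))))))) (Node (Node (Node (Node (Node (Node (Node (Leaf (0, 2, 16, 18)) (Leaf (0, 3, 7, 10))) (Node (Leaf (1, 2, 6, 7)) (Leaf (4, 6, 11, 16)))) (Node (Node (Leaf (2, 3, 4, 13)) (Leaf (1, 4, 11, 19))) (Node (Leaf (1, 4, 8, 16)) (Leaf (1, 5, 7, 12))))) (Node (Node (Node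 (Leaf (0, 7, 10, 14)) (Leaf (3, 10, 12, 13))) (Node (Leaf (0, 9, 12, 16)) (Leaf (4, 9, 14, 19)))) (Node (Node (Leaf (0, 7, 11, 15)) (Leaf (2, 4, 13, 14))) (Node (Leaf (1, 13, 17, 20)) (Leaf (0, 1, 5, 13)))))) (Node (Node (Node (Node (Leaf (1, 2, 8, 16)) (Leaf (0, 9, 10, 16))) (Node (Leaf (1, 3, 16, 20)) (Leaf (0, 7, 12, 14)))) (Node (Node (Leaf (1, 4, 6, 7)) (Leaf (1, 9, 11, 13))) (Node (Leaf (0, 4, 16, 18)) (Leaf (7, 9, 14, 17))))) (Node (Node (Node (Leaf (2, 4, 16, 17)) (Leaf (1, 7, 11, 17))) (Node (Leaf (0, 3, 7, 12)) (Leaf (0, 1, 15, 16)))) (Node (Node (Leaf (1, 5, 7, 10)) (Leaf (0, 6, 15, 19))) (Node (Leaf (3, 7, 9, 17)) (Leaf (5, 8, 13, 18))))))) (Node (Node (Node (Node (Node (Leaf (1, 6, 8, 10)) (Leaf (0, 1, 13, 16))) (Node (Leaf (1, 3, 9, 10)) (Leaf (0, 2, 3, 8)))) (Node (Node (Leaf (0, 5, 9, 12)) (Leaf (1, 3, 4, 18))) (Node (Leaf (8, 10, 16, 19)) (Leaf (0, 6, 13, 19))))) (Node (Node (Node (Leaf (0, 3, 14, 20)) (Leaf (1, 7, 12, 16))) (Node (Leaf (0, 2, 8, 14)) (Leaf (0, 6, 12, 18)))) (Node (Node (Leaf (1, 4, 14, 18)) (Leaf (3, 8, 17, 18))) (Node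 (Leaf (0, 2, 5, 18)) (Leaf (1, 9, 11, 15)))))) (Node (Node (Node (Node (Leaf (0, 6, 10, 18)) (Leaf (1, 8, 18, 20))) (Node (Leaf (1, 7, 10, 16)) (Leaf (1, 2, 3, 18)))) (Node (Node (Leaf (0, 1, 14, 17)) (Leaf (0, 1, 5, 15))) (Node (Leaf (0, 7, 11, 13)) (Leaf (0, 2, 4, 20))))) (Node (Node (Node (Leaf (0, 4, 5, 18)) (Leaf (1, 3, 9, 12))) (Node (Leaf (0, 9, 11, 17)) (Leaf (1, 6, 8, 12)))) (Node (Node (Leaf (0, 4, 8, 14)) (Leaf (0, 1, 3, 17))) (Node (Leaf (1, 2, 5, 8)) (Leaf (0, 5, 9, 10)))))))) (Node (Node (Node (Node (Node (Node (Leaf (0, 3, 5, 9)) (Leaf (1, 4, 12, 18))) (Node (Leaf (0, 1, 10, 17)) (Leaf (1, 5, 10, 20)))) (Node (Node (Leaf (0, 7, 13, 15)) (Leaf (0, 3, 12, 20))) (Node (Leaf (0, 6, 14, 18)) (Leaf (0, 1, 5, 11))))) (Node (Node (Node (Leaf (0, 9, 15, 17)) (Leaf (0, 5, 9, 14))) (Node (Leaf (0, 4, 8, 10)) (Leaf (1, 2, 4, 9)))) (Node (Node (Leaf (0, 12, 14, 20)) (Leaf (0, 8, 9, 18))) (Node (Leaf (4, 8, 11, 20)) (Leaf (0, 3, 6, 18)))))) (Node (Node (Node (Node (Leaf (0, 5, 7, 16)) (Leaf (0, 4, 8, 12))) (Node (Leaf (1, 5, 6, 18)) (Leaf (0, 11,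 15, 20)))) (Node (Node (Leaf (1, 3, 9, 14)) (Leaf (4, 8, 9, 17))) (Node (Leaf (1, 6, 8, 14)) (Leaf (0, 10, 14, 20))))) (Node (Node (Node (Leaf (1, 5, 12, 20)) (Leaf (0, 1, 12, 17))) (Node (Leaf (1, 4, 10, 18)) (Leaf (1, 2, 13, 19)))) (Node (Node (Leaf (0, 2, 8, 10)) (Leaf (1, 2, 6, 20))) (Node (Leaf (0, 3, 10, 20)) (Leaf (1, 3, 6, 8))))))) (Node (Node (Node (Node (Node (Leaf (2, 4, 12, 13)) (Leaf (1, 2, 15, 19))) (Node (Leaf (0, 4, 17, 19)) (Leaf (1, 3, 5, 7)))) (Node (Node (Leaf (3, 10, 13, 14)) (Leaf (0, 7, 10, 12))) (Node (Leaf (4, 7, 17, 18)) (Leaf (0, 9, 14, 16))))) (Node (Node (Node (Leaf (0, 2, 4, 7)) (Leaf (0, 1, 11, 16))) (Node (Leaf (0, 1, 8, 19)) (Leaf (1, 7, 15, 17)))) (Node (Node (Leaf (0, 6, 8, 16)) (Leaf (1, 10, 16, 20))) (Node (Leaf (0, 3, 9, 16)) (Leaf (0, 6, 11, 19)))))) (Node (Node (Node (Node (Leaf (2, 7, 17, 18)) (Leaf (3, 10, 16, 17))) (Node (Leaf (0, 9, 13, 17)) (Leaf (1, 5, 9, 16)))) (Node (Node (Leaf (0, 2, 17, 19)) (Leaf (2, 5, 19, 20))) (Node (Leaf (1, 12, 16, 20)) (Leaf (0, 3, 7, 14))))) (Node (Node (Node (Leaf (10, 14, 16, 17)) (Leaf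 (5, 10, 15, 16))) (Node (Leaf (7, 9, 12, 17)) (Leaf (2, 4, 10, 13)))) (Node (Node (Leaf (1, 6, 16, 18)) (Leaf (4, 9, 10, 19))) (Node (Leaf (5, 8, 14, 19)) (Leaf (3, 12, 13, 14))))))))))) (Node (Node (Node (Node (Node (Node (Node (Node (Node (Leaf (0, 1, 3, 18)) (Leaf (4, 5, 9, 12))) (Node (Leaf (3, 6, 7, 16)) (Leaf (1, 6, 12, 15)))) (Node (Node (Leaf (0, 4, 14, 15)) (Leaf (0, 4, 5, 17))) (Node (Leaf (1, 2, 5, 15)) (Leaf (0, 9, 11, 18))))) (Node (Node (Node (Leaf (0, 5, 6, 11)) (Leaf (0, 1, 14, 18))) (Node (Leaf (5, 10, 13, 19)) (Leaf (2, 4, 5, 18)))) (Node (Node (Leaf (1, 8, 17, 20)) (Leaf (0, 1, 5, 8))) (Node (Leaf (1, 2, 3, 17)) (Leaf (2, 4, 8, 14)))))) (Node (Node (Node (Node (Leaf (1, 4, 5, 15)) (Leaf (1, 4, 14, 17))) (Node (Leaf (0, 2, 14, 15)) (Leaf (0, 2, 5, 17)))) (Node (Node (Leaf (1, 9, 16, 19)) (Leaf (1, 3, 6, 11))) (Node (Leaf (0, 2, 10, 11)) (Leaf (1, 8, 9, 11))))) (Node (Node (Node (Leaf (1, 3, 4, 17)) (Leaf (0, 5, 7, 19))) (Node (Leaf (4, 5, 9, 10)) (Leaf (0, 2, 3, 15)))) (Node (Node (Leaf (0, 17, 18, 20)) (Leaf (8, 10, 11, 15))) (Node (Leaf (6,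 7, 13, 17)) (Leaf (4, 9, 11, 17))))))) (Node (Node (Node (Node (Node (Leaf (0, 1, 11, 19)) (Leaf (0, 2, 3, 13))) (Node (Leaf (1, 6, 10, 13)) (Leaf (0, 1, 8, 16)))) (Node (Node (Leaf (1, 7, 11, 18)) (Leaf (0, 6, 8, 19))) (Node (Leaf (0, 6, 11, 16)) (Leaf (0, 3, 9, 19))))) (Node (Node (Node (Leaf (0, 2, 13, 14)) (Leaf (2, 3, 7, 12))) (Node (Leaf (1, 4, 5, 13)) (Leaf (0, 4, 16, 17)))) (Node (Node (Leaf (3, 5, 6, 7)) (Leaf (4, 7, 10, 14))) (Node (Leaf (0, 9, 14, 19)) (Leaf (3, 13, 17, 18)))))) (Node (Node (Node (Node (Leaf (5, 10, 15, 19)) (Leaf (0, 1, 6, 7))) (Node (Leaf (2, 3, 7, 10)) (Leaf (1, 13, 18, 20)))) (Node (Node (Leaf (0, 7, 8, 11)) (Leaf (1, 6, 18, 19))) (Node (Leaf (4, 7, 12, 14)) (Leaf (0, 3, 4, 13))))) (Node (Node (Node (Leaf (3, 10, 17, 19)) (Leaf (1, 6, 12, 13))) (Node (Leaf (1, 5, 9, 19)) (Leaf (2, 7, 10, 14)))) (Node (Node (Leaf (1, 2, 5, 13)) (Leaf (0, 2, 16, 17))) (Node (Leaf (0, 4, 13, 14)) (Leaf (1, 12, 19, 20)))))))) (Node (Node (Node (Node (Node (Node (Leaf (0, 5, 6, 13)) (Leaf (1, 6, 16, 17))) (Node (Leaf (4, 9, 14, 16)) (Leaf (0, 7, 17, 18))))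 (Node (Node (Leaf (2, 3, 7, 14)) (Leaf (0, 2, 12, 13))) (Node (Leaf (0, 5, 19, 20)) (Leaf (7, 9, 12, 18))))) (Node (Node (Node (Leaf (0, 4, 10, 13)) (Leaf (0, 2, 18, 19))) (Node (Leaf (4, 6, 11, 19)) (Leaf (3, 4, 9, 16)))) (Node (Node (Leaf (1, 4, 11, 16)) (Leaf (6, 7, 9, 20))) (Node (Leaf (3, 14, 17, 19)) (Leaf (0, 9, 13, 18)))))) (Node (Node (Node (Node (Leaf (10, 13, 17, 18)) (Leaf (2, 4, 17, 19))) (Node (Leaf (0, 1, 15, 19)) (Leaf (0, 4, 12, 13)))) (Node (Node (Leaf (0, 6, 15, 16)) (Leaf (5, 11, 13, 18))) (Node (Leaf (1, 7, 15, 18)) (Leaf (3, 12, 16, 18))))) (Node (Node (Node (Leaf (0, 9, 10, 19)) (Leaf (1, 2, 8, 19))) (Node (Leaf (1, 2, 11, 16)) (Leaf (1, 3, 19, 20)))) (Node (Node (Leaf (2, 6, 11, 19)) (Leaf (1, 3, 6, 13))) (Node (Leaf (0, 2, 10, 13)) (Leaf (0, 4, 18, 19))))))) (Node (Node (Node (Node (Node (Leaf (0, 2, 11, 14)) (Leaf (3, 15, 16, 19))) (Node (Leaf (1, 4, 5, 11)) (Leaf (2, 5, 7, 16)))) (Node (Node (Leaf (0, 1, 12, 18)) (Leaf (1, 8, 9, 15))) (Node (Leaf (3, 8, 10, 14)) (Leaf (1, 3, 6, 15))))) (Node (Node (Node (Leaf (0, 1, 13, 19)) (Leaf (0, 2,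 3, 11))) (Node (Leaf (1, 2, 12, 17)) (Leaf (0, 8, 11, 20)))) (Node (Node (Leaf (1, 7, 13, 18)) (Leaf (2, 3, 10, 20))) (Node (Leaf (0, 1, 2, 9)) (Leaf (1, 5, 6, 17)))))) (Node (Node (Node (Node (Leaf (0, 8, 9, 17)) (Leaf (1, 2, 10, 17))) (Node (Leaf (0, 3, 6, 17)) (Leaf (2, 3, 5, 9)))) (Node (Node (Leaf (1, 2, 5, 11)) (Leaf (0, 9, 15, 18))) (Node (Leaf (0, 4, 11, 14)) (Leaf (2, 7, 13, 15))))) (Node (Node (Node (Leaf (0, 1, 4, 9)) (Leaf (2, 4, 8, 10))) (Node (Leaf (0, 5, 6, 15)) (Leaf (0, 6, 14, 17)))) (Node (Node (Leaf (0, 7, 8, 13)) (Leaf (3, 8, 12, 14))) (Node (Leaf (2, 8, 9, 18)) (Leaf (0, 1, 10, 18))))))))) (Node (Node (Node (Node (Node (Node (Node (Leaf (1, 8, 11, 17)) (Leaf (0, 2, 12, 20))) (Node (Leaf (0, 5, 13, 19)) (Leaf (0, 3, 8, 12)))) (Node (Node (Leaf (0, 2, 5, 9)) (Leaf (1, 5, 8, 10))) (Node (Leaf (1, 4, 9, 14)) (Leaf (3, 8, 9, 17))))) (Node (Node (Node (Leaf (1, 3, 10, 18)) (Leaf (1, 2, 7, 16))) (Node (Leaf (0, 8, 12, 14)) (Leaf (0, 2, 6, 18)))) (Node (Node (Leaf (0, 4, 10, 20)) (Leaf (1, 4, 6, 8))) (Node (Leaf (0, 5, 12, 18)) (Leaf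 (1, 3, 4, 9)))))) (Node (Node (Node (Node (Leaf (0, 1, 6, 15)) (Leaf (0, 8, 10, 14))) (Node (Leaf (0, 4, 5, 9)) (Leaf (1, 3, 12, 18)))) (Node (Node (Leaf (7, 11, 17, 19)) (Leaf (0, 5, 10, 18))) (Node (Leaf (0, 15, 16, 19)) (Leaf (0, 4, 12, 20))))) (Node (Node (Node (Leaf (0, 3, 8, 10)) (Leaf (1, 2, 3, 9))) (Node (Leaf (0, 2, 10, 20)) (Leaf (1, 2, 6, 8)))) (Node (Node (Leaf (3, 8, 11, 20)) (Leaf (0, 4, 6, 18))) (Node (Leaf (1, 5, 8, 12)) (Leaf (1, 3, 13, 19))))))) (Node (Node (Node (Node (Node (Leaf (0, 12, 16, 18)) (Leaf (4, 14, 18, 19))) (Node (Leaf (1, 6, 7, 12)) (Leaf (3, 6, 15, 16)))) (Node (Node (Leaf (2, 11, 13, 15)) (Leaf (0, 4, 7, 14))) (Node (Leaf (4, 5, 11, 16)) (Leaf (1, 2, 5, 7))))) (Node (Node (Node (Leaf (1, 7, 18, 20)) (Leaf (2, 3, 10, 13))) (Node (Leaf (0, 1, 6, 13)) (Leaf (1, 8, 10, 16)))) (Node (Node (Leaf (0, 1, 19, 20)) (Leaf (1, 5, 17, 19))) (Node (Leaf (2, 12, 16, 17)) (Leaf (0, 8, 11, 13)))))) (Node (Node (Node (Node (Leaf (0, 3, 17, 19)) (Leaf (1, 4, 5, 7))) (Node (Leaf (2, 3, 12, 13)) (Leaf (0, 2, 7, 14)))) (Node (Node (Leaf (3, 7,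 17, 18)) (Leaf (2, 10, 16, 17))) (Node (Leaf (4, 10, 13, 14)) (Leaf (2, 14, 18, 19))))) (Node (Node (Node (Leaf (0, 5, 15, 19)) (Leaf (0, 14, 17, 19))) (Node (Leaf (0, 2, 3, 7)) (Leaf (0, 10, 16, 18)))) (Node (Node (Leaf (0, 4, 9, 16)) (Leaf (7, 14, 17, 18))) (Node (Leaf (2, 3, 18, 19)) (Leaf (1, 11, 13, 18)))))))) (Node (Node (Node (Node (Node (Node (Leaf (1, 4, 16, 20)) (Leaf (1, 12, 15, 19))) (Node (Leaf (2, 5, 15, 16)) (Leaf (2, 14, 16, 17)))) (Node (Node (Leaf (0, 3, 16, 18)) (Leaf (0, 2, 7, 10))) (Node (Leaf (1, 3, 6, 7)) (Leaf (6, 12, 15, 16))))) (Node (Node (Node (Leaf (0, 4, 7, 12)) (Leaf (0, 5, 8, 16))) (Node (Leaf (0, 5, 11, 19)) (Leaf (7, 10, 17, 18)))) (Node (Node (Leaf (4, 7, 9, 17)) (Leaf (0, 14, 16, 18))) (Node (Leaf (5, 7, 11, 18)) (Leaf (0, 10, 17, 19)))))) (Node (Node (Node (Node (Leaf (2, 6, 19, 20)) (Leaf (3, 6, 11, 16))) (Node (Leaf (3, 6, 8, 19)) (Leaf (0, 4, 7, 10)))) (Node (Node (Leaf (0, 7, 9, 18)) (Leaf (4, 14, 16, 17))) (Node (Leaf (1, 2, 16, 20)) (Leaf (1, 3, 11, 19))))) (Node (Node (Node (Leaf (0, 13, 17, 18)) (Leaf (1, 5, 16, 18))) (Node (Leaf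 (1, 10, 15, 19)) (Leaf (0, 5, 6, 7)))) (Node (Node (Leaf (3, 4, 16, 17)) (Leaf (0, 8, 13, 15))) (Node (Leaf (0, 2, 7, 12)) (Leaf (2, 3, 13, 14))))))) (Node (Node (Node (Node (Node (Leaf (1, 10, 13, 19)) (Leaf (1, 2, 4, 18))) (Node (Leaf (0, 1, 6, 11)) (Leaf (0, 5, 14, 18)))) (Node (Node (Leaf (0, 11, 16, 19)) (Leaf (0, 2, 3, 20))) (Node (Leaf (1, 2, 9, 10)) (Leaf (5, 7, 14, 19))))) (Node (Node (Node (Leaf (2, 10, 11, 14)) (Leaf (2, 8, 17, 18))) (Node (Leaf (0, 3, 5, 18)) (Leaf (1, 4, 9, 12)))) (Node (Node (Leaf (0, 2, 14, 20)) (Leaf (2, 5, 14, 17))) (Node (Leaf (0, 3, 8, 14)) (Leaf (0, 1, 4, 17)))))) (Node (Node (Node (Node (Leaf (1, 4, 9, 10)) (Leaf (0, 2, 4, 8))) (Node (Leaf (1, 8, 15, 17)) (Leaf (0, 1, 7, 19)))) (Node (Node (Leaf (7, 8, 10, 13)) (Leaf (0, 6, 7, 16))) (Node (Leaf (5, 6, 11, 14)) (Leaf (2, 10, 12, 15))))) (Node (Node (Node (Leaf (1, 2, 5, 20)) (Leaf (0, 1, 2, 17))) (Node (Leaf (0, 4, 14, 20)) (Leaf (1, 12, 13, 19)))) (Node (Node (Leaf (0, 8, 10, 12)) (Leaf (1, 2, 9, 12))) (Node (Leaf (1, 3, 14, 18)) (Leaf (3, 5, 6, 11)))))))))) (Node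 (Node (Node (Node (Node (Node (Node (Node (Leaf (1, 2, 3, 12)) (Leaf (2, 7, 15, 16))) (Node (Leaf (1, 8, 12, 20)) (Leaf (0, 2, 11, 17)))) (Node (Node (Leaf (1, 4, 10, 14)) (Leaf (1, 3, 5, 6))) (Node (Leaf (0, 2, 5, 10)) (Leaf (1, 5, 8, 9))))) (Node (Node (Node (Leaf (1, 6, 8, 18)) (Leaf (0, 7, 11, 19))) (Node (Leaf (0, 7, 8, 16)) (Leaf (0, 4, 5, 12)))) (Node (Node (Leaf (1, 5, 6, 14)) (Leaf (1, 3, 4, 10))) (Node (Leaf (0, 2, 4, 6)) (Leaf (4, 5, 9, 17)))))) (Node (Node (Node (Node (Leaf (0, 4, 5, 10)) (Leaf (0, 3, 6, 14))) (Node (Leaf (0, 12, 18, 20)) (Leaf (0, 8, 9, 14)))) (Node (Node (Leaf (4, 5, 11, 20)) (Leaf (0, 4, 11, 17))) (Node (Leaf (1, 2, 11, 15)) (Leaf (0, 5, 9, 18))))) (Node (Node (Node (Leaf (0, 2, 9, 20)) (Leaf (1, 8, 10, 20))) (Node (Leaf (0, 3, 8, 9)) (Leaf (1, 2, 3, 10)))) (Node (Node (Leaf (2, 9, 10, 11)) (Leaf (0, 1, 8, 11))) (Node (Leaf (0, 1, 16, 19)) (Leaf (1, 4, 12, 14))))))) (Node (Node (Node (Node (Node (Leaf (0, 7, 14, 18)) (Leaf (3, 12, 13, 18))) (Node (Leaf (0, 6, 13, 15)) (Leaf (5, 11, 16, 18)))) (Node (Node (Leaf (0, 5, 7, 8))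 (Leaf (0, 4, 12, 16))) (Node (Leaf (10, 16, 17, 18)) (Leaf (2, 3, 7, 17))))) (Node (Node (Node (Leaf (0, 2, 10, 16)) (Leaf (0, 3, 7, 18))) (Node (Leaf (1, 9, 11, 19)) (Leaf (1, 3, 6, 16)))) (Node (Node (Leaf (1, 2, 11, 13)) (Leaf (1, 4, 7, 20))) (Node (Leaf (2, 7, 14, 17)) (Leaf (2, 5, 7, 15)))))) (Node (Node (Node (Node (Leaf (0, 1, 5, 19)) (Leaf (1, 17, 19, 20))) (Node (Leaf (2, 4, 14, 19)) (Leaf (0, 2, 12, 16)))) (Node (Node (Leaf (1, 5, 7, 18)) (Leaf (6, 7, 11, 14))) (Node (Leaf (0, 5, 6, 16)) (Leaf (1, 6, 13, 17))))) (Node (Node (Node (Leaf (4, 7, 14, 17)) (Leaf (0, 9, 16, 18))) (Node (Leaf (1, 4, 11, 13)) (Leaf (1, 2, 7, 20)))) (Node (Node (Leaf (3, 6, 7, 11)) (Leaf (3, 4, 9, 13))) (Node (Leaf (0, 4, 10, 16)) (Leaf (4, 6, 8, 13)))))))) (Node (Node (Node (Node (Node (Node (Leaf (3, 12, 14, 19)) (Leaf (0, 3, 4, 16))) (Node (Leaf (4, 9, 10, 13)) (Leaf (2, 7, 12, 17)))) (Node (Node (Leaf (2, 4, 10, 19)) (Leaf (1, 16, 18, 20))) (Node (Leaf (1, 7, 8, 10)) (Leaf (0, 2, 7, 9))))) (Node (Node (Node (Leaf (0, 4, 14, 16)) (Leaf (7, 9, 17, 18))) (Node (Leaf (1, 2,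 5, 16)) (Leaf (0, 2, 13, 17)))) (Node (Node (Leaf (2, 5, 6, 19)) (Leaf (0, 7, 12, 18))) (Node (Leaf (3, 6, 7, 15)) (Leaf (1, 6, 12, 16)))))) (Node (Node (Node (Node (Leaf (0, 6, 11, 13)) (Leaf (0, 4, 7, 9))) (Node (Leaf (7, 11, 18, 20)) (Leaf (2, 4, 13, 18)))) (Node (Node (Leaf (1, 6, 10, 16)) (Leaf (0, 1, 8, 13))) (Node (Leaf (0, 7, 10, 18)) (Leaf (0, 2, 3, 16))))) (Node (Node (Node (Leaf (1, 9, 15, 19)) (Leaf (3, 16, 17, 18))) (Node (Leaf (4, 5, 6, 19)) (Leaf (3, 10, 14, 19)))) (Node (Node (Leaf (1, 4, 5, 16)) (Leaf (0, 4, 13, 17))) (Node (Leaf (0, 2, 14, 16)) (Leaf (2, 4, 12, 19))))))) (Node (Node (Node (Node (Node (Leaf (11, 12, 14, 18)) (Leaf (1, 5, 6, 12))) (Node (Leaf (0, 4, 8, 18)) (Leaf (2, 3, 9, 11)))) (Node (Node (Leaf (1, 6, 9, 20)) (Leaf (0, 8, 9, 10))) (Node (Leaf (0, 4, 5, 14)) (Leaf (0, 3, 6, 10))))) (Node (Node (Node (Leaf (6, 7, 16, 17)) (Leaf (1, 4, 10, 12))) (Node (Leaf (0, 1, 17, 18)) (Leaf (1, 5, 18, 20)))) (Node (Node (Leaf (2, 4, 8, 17)) (Leaf (1, 2, 3, 14))) (Node (Leaf (0, 6, 10, 14)) (Leaf (0, 1, 8, 15)))))) (Node (Node (Node (Node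 (Leaf (0, 2, 5, 14)) (Leaf (0, 2, 15, 17))) (Node (Leaf (3, 5, 8, 15)) (Leaf (2, 7, 11, 16)))) (Node (Node (Leaf (0, 2, 8, 18)) (Leaf (0, 6, 12, 14))) (Node (Leaf (0, 3, 18, 20)) (Leaf (3, 5, 17, 18))))) (Node (Node (Node (Leaf (2, 3, 17, 20)) (Leaf (0, 2, 3, 5))) (Node (Leaf (1, 5, 6, 10)) (Leaf (0, 5, 8, 20)))) (Node (Node (Leaf (0, 3, 6, 12)) (Leaf (6, 7, 13, 14))) (Node (Leaf (0, 8, 9, 12)) (Leaf (0, 14, 18, 20))))))))) (Node (Node (Node (Node (Node (Node (Node (Leaf (0, 5, 17, 18)) (Leaf (0, 14, 15, 18))) (Node (Leaf (0, 4, 9, 11)) (Leaf (0, 6, 7, 13)))) (Node (Node (Leaf (0, 8, 14, 17)) (Leaf (0, 1, 3, 4))) (Node (Leaf (2, 3, 15, 17)) (Leaf (2, 3, 5, 14))))) (Node (Node (Node (Leaf (0, 3, 15, 18)) (Leaf (3, 8, 9, 12))) (Node (Leaf (2, 8, 14, 18)) (Leaf (2, 9, 12, 20)))) (Node (Node (Leaf (0, 1, 4, 14)) (Leaf (0, 3, 8, 17))) (Node (Leaf (1, 8, 11, 12)) (Leaf (0, 2, 17, 20)))))) (Node (Node (Node (Node (Leaf (1, 5, 8, 17)) (Leaf (0, 1, 8, 20))) (Node (Leaf (0, 11, 13, 19)) (Leaf (0, 1, 2, 3)))) (Node (Node (Leaf (0, 2, 9, 11)) (Leaf (1, 5, 15,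 18))) (Node (Leaf (1, 10, 16, 19)) (Leaf (2, 4, 18, 20))))) (Node (Node (Node (Leaf (1, 3, 8, 15)) (Leaf (0, 4, 17, 20))) (Node (Leaf (0, 1, 2, 14)) (Leaf (8, 9, 10, 14)))) (Node (Node (Leaf (4, 8, 14, 18)) (Leaf (1, 3, 17, 18))) (Node (Leaf (0, 11, 12, 18)) (Leaf (5, 9, 10, 18))))))) (Node (Node (Node (Node (Node (Leaf (1, 2, 13, 20)) (Leaf (1, 4, 7, 11))) (Node (Leaf (1, 3, 8, 13)) (Leaf (1, 5, 12, 19)))) (Node (Node (Leaf (4, 6, 7, 8)) (Leaf (0, 3, 10, 19))) (Node (Leaf (1, 2, 6, 19)) (Leaf (3, 6, 11, 13))))) (Node (Node (Node (Leaf (0, 11, 15, 19)) (Leaf (2, 3, 14, 16))) (Node (Leaf (3, 4, 13, 17)) (Leaf (0, 8, 15, 16)))) (Node (Node (Leaf (0, 10, 14, 19)) (Leaf (4, 10, 12, 16))) (Node (Leaf (0, 16, 17, 18)) (Leaf (1, 5, 13, 18)))))) (Node (Node (Node (Node (Leaf (1, 4, 6, 19)) (Leaf (6, 12, 13, 15))) (Node (Leaf (0, 3, 13, 18)) (Leaf (7, 12, 14, 18)))) (Node (Node (Leaf (2, 5, 13, 15)) (Leaf (2, 13, 14, 17))) (Node (Leaf (1, 4, 13, 20)) (Leaf (0, 12, 14, 19))))) (Node (Node (Node (Leaf (1, 5, 10, 19)) (Leaf (0, 6, 7, 15))) (Node (Leaf (3, 7, 12, 18)) (Leaf (0, 13,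 14, 18)))) (Node (Node (Leaf (2, 3, 13, 17)) (Leaf (1, 11, 17, 19))) (Node (Leaf (0, 3, 12, 19)) (Leaf (0, 5, 8, 13)))))))) (Node (Node (Node (Node (Node (Node (Leaf (4, 10, 14, 16)) (Leaf (0, 10, 12, 19))) (Node (Leaf (4, 7, 9, 12)) (Leaf (2, 10, 13, 17)))) (Node (Node (Leaf (2, 3, 12, 16)) (Leaf (1, 2, 7, 15))) (Node (Leaf (0, 4, 7, 17)) (Leaf (1, 3, 5, 19))))) (Node (Node (Node (Leaf (2, 4, 7, 18)) (Leaf (1, 11, 16, 18))) (Node (Leaf (0, 4, 9, 13)) (Leaf (0, 6, 7, 11)))) (Node (Node (Leaf (0, 2, 4, 19)) (Leaf (0, 10, 13, 18))) (Node (Leaf (0, 1, 7, 8)) (Leaf (1, 15, 17, 19)))))) (Node (Node (Node (Node (Leaf (0, 2, 7, 17)) (Leaf (2, 5, 7, 20))) (Node (Leaf (2, 11, 15, 16)) (Leaf (0, 3, 14, 19)))) (Node (Node (Leaf (2, 7, 9, 12)) (Leaf (3, 6, 13, 15))) (Node (Leaf (0, 12, 13, 18)) (Leaf (3, 7, 14, 18))))) (Node (Node (Node (Leaf (2, 12, 13, 17)) (Leaf (0, 8, 11, 16))) (Node (Leaf (5, 7, 8, 14)) (Leaf (4, 12, 14, 16)))) (Node (Node (Leaf (0, 1, 6, 16)) (Leaf (1, 8, 10, 13))) (Node (Leaf (9, 12, 17, 19)) (Leaf (2, 3, 10, 16))))))) (Node (Node (Node (Node (Node (Leaf (0, 13,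 15, 19)) (Leaf (0, 1, 4, 12))) (Node (Leaf (1, 10, 17, 18)) (Leaf (1, 8, 11, 14)))) (Node (Node (Leaf (3, 8, 9, 14)) (Leaf (1, 4, 9, 17))) (Node (Leaf (0, 2, 9, 15)) (Leaf (1, 5, 11, 18))))) (Node (Node (Node (Leaf (1, 2, 11, 20)) (Leaf (0, 8, 12, 17))) (Node (Leaf (1, 3, 8, 11)) (Leaf (2, 8, 13, 19)))) (Node (Node (Leaf (0, 1, 2, 10)) (Leaf (2, 6, 8, 20))) (Node (Leaf (4, 5, 10, 14)) (Leaf (2, 3, 9, 20)))))) (Node (Node (Node (Node (Leaf (0, 4, 9, 15)) (Leaf (2, 3, 5, 10))) (Node (Leaf (0, 1, 5, 6)) (Leaf (0, 11, 14, 18)))) (Node (Node (Leaf (0, 5, 16, 19)) (Leaf (1, 13, 17, 19))) (Node (Leaf (8, 9, 10, 12)) (Leaf (0, 1, 2, 12))))) (Node (Node (Node (Leaf (2, 5, 10, 14)) (Leaf (1, 7, 9, 19))) (Node (Leaf (0, 1, 4, 10)) (Leaf (2, 4, 8, 9)))) (Node (Node (Leaf (1, 8, 12, 15)) (Leaf (0, 1, 9, 18))) (Node (Leaf (1, 4, 11, 20)) (Leaf (1, 2, 7, 13))))))))))))"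

\<comment> \<open>The simplifier leaves small results of \<open>xor\<close> as \<open>Suc (Suc 0)\<close> etc.; hence the reversed numeral
  equations here and the index \<open>Suc 0\<close> in \<open>top_cols_nth\<close>.\<close>
lemma valid_cover_tree: "valid_tree 11 0 cover_tree"
  by (simp add: cover_tree_def top_cols_nth numeral_2_eq_2 [symmetric] numeral_3_eq_3 [symmetric])

lemma top_cols_saturating:
  fixes s :: nat
  assumes "s < 2 ^ 11"
  obtains A where "A \<subseteq> {..<21}" "card A = 4"
    "\<And>i. (\<Sum>a\<in>A. of_bool (bit (top_cols ! a) i)) = (of_bool (bit s i) :: bit)"
proof -
  obtain a b c d where abcd: "a < b" "b < c" "c < d" "d < 21"
    and xor: "xor (top_cols ! a) (xor (top_cols ! b) (xor (top_cols ! c) (top_cols ! d))) = s"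
    using valid_tree_covers[OF valid_cover_tree, of s] assms by auto
  show ?thesis
  proof (rule that[of "{a, b, c, d}"])
    show "{a, b, c, d} \<subseteq> {..<21}" "card {a, b, c, d} = 4"
      using abcd by auto
    show "(\<Sum>j\<in>{a, b, c, d}. of_bool (bit (top_cols ! j) i)) = (of_bool (bit s i) :: bit)" for i
      using abcd by (simp add: xor[symmetric] of_bool_bit_xor ac_simps)
  qed
qed

section \<open>The parity-check matrix\<close>

definition parity_check :: "nat \<Rightarrow> nat \<Rightarrow> bit" where
  "parity_check i c =
     (if i < 11 then of_bool (bit (top_cols ! (c div 32)) i)
      else if i < 31 then
        coeff (poly_of_bits (c div 32) ^ ((i - 11) div 5) * poly_of_bits (c mod 32) mod gf_mod)
          ((i - 11) mod 5)
      else 0)"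

lemma parity_check_top:
  "i < 11 \<Longrightarrow> \<beta> < 32 \<Longrightarrow> parity_check i (32 * a + \<beta>) = of_bool (bit (top_cols ! a) i)"
  by (simp add: parity_check_def)

lemma parity_check_bottom:
  "11 \<le> i \<Longrightarrow> i < 31 \<Longrightarrow> \<beta> < 32 \<Longrightarrow>
    parity_check i (32 * a + \<beta>) =
      coeff (poly_of_bits a ^ ((i - 11) div 5) * poly_of_bits \<beta> mod gf_mod) ((i - 11) mod 5)"
  by (simp add: parity_check_def)

lemma col_sum_parity_check:
  assumes "finite A" "\<And>a. a \<in> A \<Longrightarrow> \<beta> a < 32"
  shows "col_sum 31 parity_check ((\<lambda>a. 32 * a + \<beta> a) ` A) i =
    (if i < 11 then \<Sum>a\<in>A. of_bool (bit (top_cols ! a) i)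
     else if i < 31 then
       coeff ((\<Sum>a\<in>A. poly_of_bits a ^ ((i - 11) div 5) * poly_of_bits (\<beta> a)) mod gf_mod)
         ((i - 11) mod 5)
     else 0)"
proof -
  have "inj_on (\<lambda>a. 32 * a + \<beta> a) A"
  proof
    fix a b assume "a \<in> A" "b \<in> A" "32 * a + \<beta> a = 32 * b + \<beta> b"
    then have "(32 * a + \<beta> a) div 32 = (32 * b + \<beta> b) div 32"
      by simp
    then show "a = b"
      using assms(2) \<open>a \<in> A\<close> \<open>b \<in> A\<close> by simp
  qed
  then have "col_sum 31 parity_check ((\<lambda>a. 32 * a + \<beta> a) ` A) i =
      (if i < 31 then \<Sum>a\<in>A. parity_check i (32 * a + \<beta> a) else 0)"
    by (simp add: col_sum_def sum.reindex)
  also have "\<dots> = (if i < 11 then \<Sum>a\<in>A. of_bool (bit (top_cols ! a) i)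
     else if i < 31 then
       coeff ((\<Sum>a\<in>A. poly_of_bits a ^ ((i - 11) div 5) * poly_of_bits (\<beta> a)) mod gf_mod)
         ((i - 11) mod 5)
     else 0)"
    using assms
    by (simp add: parity_check_top parity_check_bottom sum_mod_gf_mod [symmetric] coeff_sum)
  finally show ?thesis .
qed

lemma gf32_digits_solve_power_sums:
  assumes "A \<subseteq> {..<32}" and t: "t \<in> {..<card A} \<rightarrow>\<^sub>E gf_elems"
  obtains \<beta> where "\<And>a. a \<in> A \<Longrightarrow> \<beta> a < 32"
    "\<And>k. k < card A \<Longrightarrow> (\<Sum>a\<in>A. poly_of_bits a ^ k * poly_of_bits (\<beta> a)) mod gf_mod = t k"
proof -
  have "finite A"
    using assms(1) finite_subset by blast
  moreover have "inj_on poly_of_bits A"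
    using assms(1) by (rule inj_on_subset[OF inj_on_poly_of_bits])
  moreover have "poly_of_bits ` A \<subseteq> gf_elems"
    using poly_of_bits_in_gf_elems by blast
  ultimately obtain w where w: "w \<in> A \<rightarrow>\<^sub>E gf_elems" "power_sums A poly_of_bits w = t"
    using t by (rule power_sums_solvable)
  have "\<forall>a\<in>A. \<exists>n. n < 32 \<and> poly_of_bits n = w a"
    using w(1) by (force simp: gf_elems_eq_image)
  then obtain \<beta> where \<beta>: "\<And>a. a \<in> A \<Longrightarrow> \<beta> a < 32 \<and> poly_of_bits (\<beta> a) = w a"
    by metis
  show ?thesis
  proof (rule that)
    show "\<beta> a < 32" if "a \<in> A" for a
      using \<beta> that by blast
    show "(\<Sum>a\<in>A. poly_of_bits a ^ k * poly_of_bits (\<beta> a)) mod gf_mod = t k" if "k < card A" for k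
      using fun_cong[OF w(2), of k] that \<beta> by (simp add: power_sums_def)
  qed
qed

lemma covers_parity_check: "covers 31 690 parity_check 4"
  unfolding covers_def
proof
  fix s assume s: "s \<in> vecs 31"
  obtain s0 :: nat where s0: "s0 < 2 ^ 11" "\<And>i. i < 11 \<Longrightarrow> bit s0 i \<longleftrightarrow> s i = 1"
    using ex_less_power_with_bits[of 11 "\<lambda>i. s i = 1"] by auto
  obtain A where A: "A \<subseteq> {..<21}" "card A = 4"
    and top: "\<And>i. (\<Sum>a\<in>A. of_bool (bit (top_cols ! a) i)) = (of_bool (bit s0 i) :: bit)"
    using top_cols_saturating[OF s0(1)] by blast
  define t where "t = (\<lambda>k\<in>{..<4}. Poly (map (\<lambda>b. s (11 + 5 * k + b)) [0..<5]))"
  have "A \<subseteq> {..<32}" "t \<in> {..<card A} \<rightarrow>\<^sub>E gf_elems"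
    using A by (auto simp: t_def Poly_in_gf_elems)
  then obtain \<beta> where \<beta>: "\<And>a. a \<in> A \<Longrightarrow> \<beta> a < 32"
    and bottom: "\<And>k. k < card A \<Longrightarrow> (\<Sum>a\<in>A. poly_of_bits a ^ k * poly_of_bits (\<beta> a)) mod gf_mod = t k"
    using gf32_digits_solve_power_sums by blast
  have "finite A"
    using A(1) finite_subset by blast
  let ?S = "(\<lambda>a. 32 * a + \<beta> a) ` A"
  have "?S \<subseteq> {..<690}"
    using A(1) \<beta> by fastforce
  moreover have "card ?S \<le> 4"
    using card_image_le[OF \<open>finite A\<close>] A(2) by metis
  moreover have "s = col_sum 31 parity_check ?S"
  proof
    fix i :: nat
    consider "i < 11" | "11 \<le> i" "i < 31" | "31 \<le> i"
      by linarith
    then show "s i = col_sum 31 parity_check ?S i"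
    proof cases
      case 1
      then have "s i = of_bool (bit s0 i)"
        using s0(2)[OF 1] by (cases "s i") simp_all
      then show ?thesis
        using 1 \<beta> by (simp add: col_sum_parity_check[OF \<open>finite A\<close>] top)
    next
      case 2
      define k where "k = (i - 11) div 5"
      have "k < card A" "i = 11 + 5 * k + (i - 11) mod 5"
        using 2 by (simp_all add: k_def A(2))
      then have "s i = coeff (t k) ((i - 11) mod 5)"
        by (simp add: t_def A(2) nth_default_def)
      then show ?thesis
        using 2 \<beta> bottom[OF \<open>k < card A\<close>] by (simp add: col_sum_parity_check[OF \<open>finite A\<close>] k_def)
    next
      case 3
      then show ?thesis
        using s \<beta> by (simp add: col_sum_parity_check[OF \<open>finite A\<close>] vecs_def)
    qed
  qed
  ultimately show "\<exists>S\<subseteq>{..<690}. card S \<le> 4 \<and> s = col_sum 31 parity_check S"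
    by blast
qed

lemma length_top_cols: "length top_cols = 22"
  by (simp add: top_cols_def)

lemma distinct_top_cols: "distinct top_cols"
  by (simp add: top_cols_def)

lemma top_cols_bounds: "v \<in> set top_cols \<Longrightarrow> 0 < v \<and> v < 2 ^ 11"
  by (auto simp: top_cols_def)

lemma parity_check_col_nonzero:
  assumes "c < 690"
  shows "\<exists>i<31. parity_check i c \<noteq> 0"
proof -
  let ?v = "top_cols ! (c div 32)"
  have "?v \<in> set top_cols"
    using assms length_top_cols by simp
  then have "0 \<noteq> ?v" "?v < 2 ^ 11"
    using top_cols_bounds by auto
  then obtain i where "i < 11" "bit 0 i \<noteq> bit ?v i"
    using ex_bit_neq_less[of 0 ?v 11] by auto
  then have "parity_check i c \<noteq> 0"
    by (simp add: parity_check_def)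
  with \<open>i < 11\<close> show ?thesis
    by (intro exI[of _ i]) simp
qed

lemma parity_check_cols_distinct:
  assumes "c < 690" "c' < 690" "c \<noteq> c'"
  shows "\<exists>i<31. parity_check i c \<noteq> parity_check i c'"
proof (cases "c div 32 = c' div 32")
  case False
  let ?v = "top_cols ! (c div 32)" and ?v' = "top_cols ! (c' div 32)"
  have "?v \<in> set top_cols" "?v' \<in> set top_cols" "?v \<noteq> ?v'"
    using assms False length_top_cols distinct_top_cols by (simp_all add: nth_eq_iff_index_eq)
  then obtain i where "i < 11" "bit ?v i \<noteq> bit ?v' i"
    using top_cols_bounds ex_bit_neq_less[of ?v ?v' 11] by auto
  then have "parity_check i c \<noteq> parity_check i c'"
    by (simp add: parity_check_def)
  with \<open>i < 11\<close> show ?thesis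
    by (intro exI[of _ i]) simp
next
  case True
  then have "c mod 32 \<noteq> c' mod 32"
    using assms(3) by (metis div_mod_decomp)
  then have "poly_of_bits (c mod 32) \<noteq> poly_of_bits (c' mod 32)"
    using inj_on_poly_of_bits by (simp add: inj_on_eq_iff)
  then obtain b where b: "coeff (poly_of_bits (c mod 32)) b \<noteq> coeff (poly_of_bits (c' mod 32)) b"
    using poly_eqI by blast
  then have "b < 5"
    by (auto simp: coeff_poly_of_bits split: if_splits)
  have "p mod gf_mod = p" if "p \<in> gf_elems" for p
    using that by (simp add: mod_poly_less gf_elems_def degree_gf_mod)
  then have "parity_check (11 + b) c \<noteq> parity_check (11 + b) c'"
    using b \<open>b < 5\<close> True by (simp add: parity_check_def poly_of_bits_in_gf_elems)
  then show ?thesis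
    using \<open>b < 5\<close> by (intro exI[of _ "11 + b"]) simp
qed

lemma col_sum_weight_three:
  "col_sum 31 parity_check {0, 32, 672} = (\<lambda>_. 0)"
proof -
  have "top_cols ! 21 = xor (top_cols ! 0) (top_cols ! 1)"
    by (simp add: top_cols_def)
  then show ?thesis
    by (auto simp: col_sum_def parity_check_def fun_eq_iff of_bool_bit_xor)
qed

lemma min_dist_parity_check: "min_dist 690 (lin_code 31 690 parity_check) = 3"
proof (rule min_dist_lin_code_eqI)
  show "3 \<le> card S"
    if "S \<subseteq> {..<690}" "S \<noteq> {}" "col_sum 31 parity_check S = (\<lambda>_. 0)" for S
    using parity_check_col_nonzero parity_check_cols_distinct that
    by (rule three_le_card_if_col_sum_eq_0)
qed (use col_sum_weight_three in auto)

theorem theorem9p2: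
  shows "(\<exists>H. is_code 690 31 3 4 H) \<and> ell2 31 4 \<le> 690"
proof -
  have covers: "covers 31 690 parity_check 4"
    by (rule covers_parity_check)
  then have codim: "codim_code 690 31 parity_check"
    by (intro codim_code_if_surj) (auto simp: covers_def)
  have radius: "cov_radius 31 690 parity_check = 4"
    using covers by (rule cov_radius_eqI) simp
  have "is_code 690 31 3 4 parity_check"
    using codim min_dist_parity_check radius by (simp add: is_code_def)
  moreover have "ell2 31 4 \<le> 690"
    unfolding ell2_def using codim radius by (intro Least_le) blast
  ultimately show ?thesis
    by blast
qed

end
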